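(* Let $\mathcal A$ be a $\mathcal{SHIQ}$-Abox (with all concepts in negation normal form) and $\mathcal R$ a role hierarchy. The completion algorithm terminates when started for $\mathcal A$ and $\mathcal R$.
   Context: $\mathcal{SHIQ}$: roles are role names and inverses $R^-$ ($\mathrm{Inv}(R)=R^-$, $\mathrm{Inv}(S^-)=S$); some role names are transitive, $\mathrm{Trans}(R)$ iff $R$ or $\mathrm{Inv}(R)$ is a transitive role name. A role hierarchy $\mathcal R$ is a set of role inclusions $R\sqsubseteq S$; $\sqsubseteq^*$ is the reflexive-transitive closure of $\sqsubseteq$ over $\mathcal R\cup\{\mathrm{Inv}(R)\sqsubseteq\mathrm{Inv}(S)\mid R\sqsubseteq S\in\mathcal R\}$; a role is simple if neither transitive nor having a transitive sub-role. Concepts: concept names, $\sqcap,\sqcup,\neg$, $\forall R.C$, $\exists R.C$, $(\geqslant n\,S\,C)$, $(\leqslant n\,S\,C)$ ($S$ simple). An Abox is a finite set of assertions $a:C$, $(a,b):R$, $a\not\doteq b$. NNF: negation only before concept names; $\sim C$ is the NNF of $\neg C$ (with $\neg(\leqslant n\,R\,C)\equiv(\geqslant(n{+}1)\,R\,C)$, $\neg(\geqslant n\,R\,C)\equiv(\leqslant(n{-}1)\,R\,C)$, $(\leqslant(-1)\,R\,C):=A\sqcap\neg A$). $\mathsf{clos}(\mathcal A)$ is the union over $a:C\in\mathcal A$ of the smallest set containing $C$ closed under subconcepts and $\sim$. $\mathbf R_{\mathcal A}$: roles in $\mathcal A$ and $\mathcal R$ with their inverses. Completion forest: a collection of trees whose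 root nodes may be connected by edges arbitrarily; each node $x$ has a label $\mathcal L(x)\subseteq\mathsf{clos}(\mathcal A)$, each edge $\langle x,y\rangle$ a label $\mathcal L(\langle x,y\rangle)\subseteq\mathbf R_{\mathcal A}$; there are symmetric relations $\not\doteq$ and $\doteq$ on nodes. If $R\in\mathcal L(\langle x,y\rangle)$ and $R\sqsubseteq^*S$, then $y$ is an $S$-successor of $x$ and $x$ an $\mathrm{Inv}(S)$-predecessor of $y$; $y$ is an $S$-neighbour of $x$ if it is an $S$-successor or $\mathrm{Inv}(S)$-predecessor of $x$; successor/predecessor/neighbour means for some $S$; ancestor is the transitive closure of predecessor. $S^{\mathcal F}(x,C)=\{y\mid y$ an $S$-neighbour of $x$, $C\in\mathcal L(y)\}$. Blocking: a node is blocked iff it is not a root and is directly or indirectly blocked. $x$ is directly blocked iff none of its ancestors is blocked and it has ancestors $x',y,y'$ with $y$ not a root, $x$ a successor of $x'$, $y$ a successor of $y'$, $\mathcal L(x)=\mathcal L(y)$, $\mathcal L(x')=\mathcal L(y')$, $\mathcal L(\langle x',x\rangle)=\mathcal L(\langle y',y\rangle)$ ($y$ blocks $x$). A node $y$ is indirectly blocked iff an ancestor is blocked or it is a successor of some $x$ with $\mathcal L(\langle x,y\rangle)=\emptyset$. Initial forest: one root $x^i$ per individual $a_i$ of $\mathcal A$ with $\mathcal L(x^i)=\{C\mid a_i:C\in\mathcal A\}$; an edge $\langle x^i,x^j\rangle$ labelled $\{R\mid(a_i,a_j):R\in\mathcal A\}$ whenever this set is nonempty; $x^i\not\doteq x^j$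 iff $a_i\not\doteq a_j\in\mathcal A$; $\doteq$ empty. Expansion rules ($\bowtie\in\{\leqslant,\geqslant\}$): $\sqcap$: if $C_1\sqcap C_2\in\mathcal L(x)$, $x$ not indirectly blocked, $\{C_1,C_2\}\not\subseteq\mathcal L(x)$: add $C_1,C_2$ to $\mathcal L(x)$. $\sqcup$: if $C_1\sqcup C_2\in\mathcal L(x)$, $x$ not indirectly blocked, $\{C_1,C_2\}\cap\mathcal L(x)=\emptyset$: add $C_1$ or $C_2$ (nondeterministic choice). $\exists$: if $\exists S.C\in\mathcal L(x)$, $x$ not blocked, and $x$ has no $S$-neighbour $y$ with $C\in\mathcal L(y)$: create a new node $y$ with $\mathcal L(\langle x,y\rangle)=\{S\}$, $\mathcal L(y)=\{C\}$. $\forall$: if $\forall S.C\in\mathcal L(x)$, $x$ not indirectly blocked, and some $S$-neighbour $y$ has $C\notin\mathcal L(y)$: add $C$ to $\mathcal L(y)$. $\forall_+$: if $\forall S.C\in\mathcal L(x)$, $x$ not indirectly blocked, some $R$ with $\mathrm{Trans}(R)$, $R\sqsubseteq^*S$, and some $R$-neighbour $y$ of $x$ has $\forall R.C\notin\mathcal L(y)$: add $\forall R.C$ to $\mathcal L(y)$. choose: if $(\bowtie n\,S\,C)\in\mathcal L(x)$, $x$ not indirectly blocked, and some $S$-neighbour $y$ has $\{C,\sim C\}\cap\mathcal L(y)=\emptyset$: add $C$ or $\sim C$ to $\mathcal L(y)$. $\geqslant$: if $(\geqslant n\,S\,C)\in\mathcal L(x)$, $x$ not blocked, and there are no $n$ $S$-neighbours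 $y_1,\dots,y_n$ with $C\in\mathcal L(y_i)$ and $y_i\not\doteq y_j$ for $i<j$: create $n$ new nodes $y_i$ with $\mathcal L(\langle x,y_i\rangle)=\{S\}$, $\mathcal L(y_i)=\{C\}$, $y_i\not\doteq y_j$ for $i<j$. $\leqslant$: if $(\leqslant n\,S\,C)\in\mathcal L(x)$, $x$ not indirectly blocked, $\#S^{\mathcal F}(x,C)>n$, and there are $S$-neighbours $y,z$ of $x$ with $y\not\doteq z$ not holding, $y$ neither a root nor an ancestor of $z$, $C\in\mathcal L(y)\cap\mathcal L(z)$: (1) add $\mathcal L(y)$ to $\mathcal L(z)$; (2) if $z$ is an ancestor of $x$, add $\{\mathrm{Inv}(R)\mid R\in\mathcal L(\langle x,y\rangle)\}$ to $\mathcal L(\langle z,x\rangle)$, else add $\mathcal L(\langle x,y\rangle)$ to $\mathcal L(\langle x,z\rangle)$; (3) set $\mathcal L(\langle x,y\rangle)=\emptyset$; (4) set $u\not\doteq z$ for all $u$ with $u\not\doteq y$. $\leqslant_r$: if $(\leqslant n\,S\,C)\in\mathcal L(x)$, $\#S^{\mathcal F}(x,C)>n$, and there are two $S$-neighbours $y,z$ of $x$ that are both roots with $C\in\mathcal L(y)\cap\mathcal L(z)$ and not $y\not\doteq z$: (1) add $\mathcal L(y)$ to $\mathcal L(z)$; (2) for every edge $\langle y,w\rangle$, create $\langle z,w\rangle$ with empty label if absent and add $\mathcal L(\langle y,w\rangle)$ to $\mathcal L(\langle z,w\rangle)$; (3) likewise for every edge $\langle w,y\rangle$ into $\langle w,z\rangle$;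 (4) set $\mathcal L(y)=\emptyset$ and remove all edges to/from $y$; (5) set $u\not\doteq z$ for all $u$ with $u\not\doteq y$, and set $y\doteq z$. A node label contains a clash if $\{A,\neg A\}\subseteq\mathcal L(x)$ for a concept name $A$, or $(\leqslant n\,S\,C)\in\mathcal L(x)$ and $x$ has $n+1$ $S$-neighbours $y_0,\dots,y_n$ with $C\in\mathcal L(y_i)$ and $y_i\not\doteq y_j$ for $i<j$. A forest is complete if no rule applies. The completion algorithm starts from the initial forest and applies the expansion rules, stopping when a clash occurs; it answers "$\mathcal A$ is consistent w.r.t. $\mathcal R$" iff the rules can be applied so as to yield a complete and clash-free completion forest, and "inconsistent" otherwise. *)

theory Defs
  imports Main
begin

datatype 'r role = RName 'r | RInv 'r

fun inv :: "'r role \<Rightarrow> 'r role" where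
  "inv (RName r) = RInv r"
| "inv (RInv r) = RName r"

fun rname :: "'r role \<Rightarrow> 'r" where
  "rname (RName r) = r"
| "rname (RInv r) = r"

text \<open>A role hierarchy is a set of role inclusions, given as pairs (R, S) meaning R below S.
  The reflexive-transitive closure of the hierarchy extended by the inverse inclusions.\<close>
definition subrole :: "('r role \<times> 'r role) set \<Rightarrow> 'r role \<Rightarrow> 'r role \<Rightarrow> bool" where
  "subrole Rh R S \<longleftrightarrow> (R, S) \<in> (Rh \<union> {(inv R', inv S') | R' S'. (R', S') \<in> Rh})\<^sup>*"

definition Trans :: "'r set \<Rightarrow> 'r role \<Rightarrow> bool" where
  "Trans Tr R \<longleftrightarrow> rname R \<in> Tr"

definition simple_role :: "'r set \<Rightarrow> ('r role \<times> 'r role) set \<Rightarrow> 'r role \<Rightarrow> bool" where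
  "simple_role Tr Rh S \<longleftrightarrow> \<not> Trans Tr S \<and> (\<forall>R. subrole Rh R S \<longrightarrow> \<not> Trans Tr R)"

datatype ('c, 'r) concept =
    CName 'c
  | CNeg "('c, 'r) concept"
  | CAnd "('c, 'r) concept" "('c, 'r) concept"
  | COr "('c, 'r) concept" "('c, 'r) concept"
  | CAll "'r role" "('c, 'r) concept"
  | CEx "'r role" "('c, 'r) concept"
  | CAtLeast nat "'r role" "('c, 'r) concept"
  | CAtMost nat "'r role" "('c, 'r) concept"

text \<open>Negation normal form. The parameter A0 is the concept name used in the
  convention (at-most (-1) R C) := A0 and not A0.\<close>
fun nnf :: "'c \<Rightarrow> ('c, 'r) concept \<Rightarrow> ('c, 'r) concept"
and neg_nnf :: "'c \<Rightarrow> ('c, 'r) concept \<Rightarrow> ('c, 'r) concept" where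
  "nnf A0 (CName A) = CName A"
| "nnf A0 (CNeg C) = neg_nnf A0 C"
| "nnf A0 (CAnd C D) = CAnd (nnf A0 C) (nnf A0 D)"
| "nnf A0 (COr C D) = COr (nnf A0 C) (nnf A0 D)"
| "nnf A0 (CAll R C) = CAll R (nnf A0 C)"
| "nnf A0 (CEx R C) = CEx R (nnf A0 C)"
| "nnf A0 (CAtLeast n R C) = CAtLeast n R (nnf A0 C)"
| "nnf A0 (CAtMost n R C) = CAtMost n R (nnf A0 C)"
| "neg_nnf A0 (CName A) = CNeg (CName A)"
| "neg_nnf A0 (CNeg C) = nnf A0 C"
| "neg_nnf A0 (CAnd C D) = COr (neg_nnf A0 C) (neg_nnf A0 D)"
| "neg_nnf A0 (COr C D) = CAnd (neg_nnf A0 C) (neg_nnf A0 D)"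
| "neg_nnf A0 (CAll R C) = CEx R (neg_nnf A0 C)"
| "neg_nnf A0 (CEx R C) = CAll R (neg_nnf A0 C)"
| "neg_nnf A0 (CAtMost n R C) = CAtLeast (Suc n) R (nnf A0 C)"
| "neg_nnf A0 (CAtLeast n R C) =
     (if n = 0 then CAnd (CName A0) (CNeg (CName A0)) else CAtMost (n - 1) R (nnf A0 C))"

definition sim :: "'c \<Rightarrow> ('c, 'r) concept \<Rightarrow> ('c, 'r) concept" where
  "sim A0 C = neg_nnf A0 C"

fun is_nnf :: "('c, 'r) concept \<Rightarrow> bool" where
  "is_nnf (CName A) = True"
| "is_nnf (CNeg (CName A)) = True"
| "is_nnf (CNeg C) = False"
| "is_nnf (CAnd C D) = (is_nnf C \<and> is_nnf D)"
| "is_nnf (COr C D) = (is_nnf C \<and> is_nnf D)"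
| "is_nnf (CAll R C) = is_nnf C"
| "is_nnf (CEx R C) = is_nnf C"
| "is_nnf (CAtLeast n R C) = is_nnf C"
| "is_nnf (CAtMost n R C) = is_nnf C"

fun nr_simple :: "'r set \<Rightarrow> ('r role \<times> 'r role) set \<Rightarrow> ('c, 'r) concept \<Rightarrow> bool" where
  "nr_simple Tr Rh (CName A) = True"
| "nr_simple Tr Rh (CNeg C) = nr_simple Tr Rh C"
| "nr_simple Tr Rh (CAnd C D) = (nr_simple Tr Rh C \<and> nr_simple Tr Rh D)"
| "nr_simple Tr Rh (COr C D) = (nr_simple Tr Rh C \<and> nr_simple Tr Rh D)"
| "nr_simple Tr Rh (CAll R C) = nr_simple Tr Rh C"
| "nr_simple Tr Rh (CEx R C) = nr_simple Tr Rh C"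
| "nr_simple Tr Rh (CAtLeast n R C) = (simple_role Tr Rh R \<and> nr_simple Tr Rh C)"
| "nr_simple Tr Rh (CAtMost n R C) = (simple_role Tr Rh R \<and> nr_simple Tr Rh C)"

datatype ('i, 'c, 'r) assertion =
    CAssert 'i "('c, 'r) concept"
  | RAssert 'i 'i "'r role"
  | NeqAssert 'i 'i

definition shiq_abox :: "'r set \<Rightarrow> ('r role \<times> 'r role) set \<Rightarrow> ('i, 'c, 'r) assertion set \<Rightarrow> bool" where
  "shiq_abox Tr Rh Ab \<longleftrightarrow> finite Ab \<and>
     (\<forall>a C. CAssert a C \<in> Ab \<longrightarrow> is_nnf C \<and> nr_simple Tr Rh C)"

definition individuals :: "('i, 'c, 'r) assertion set \<Rightarrow> 'i set" where
  "individuals Ab = {a. \<exists>C. CAssert a C \<in> Ab}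
     \<union> {a. \<exists>b R. RAssert a b R \<in> Ab \<or> RAssert b a R \<in> Ab}
     \<union> {a. \<exists>b. NeqAssert a b \<in> Ab \<or> NeqAssert b a \<in> Ab}"

text \<open>Nodes: root nodes x^i are \<open>Root a\<close> for individuals a; nodes generated by the rules are \<open>New k\<close>.\<close>
datatype 'i node = Root 'i | New nat

definition is_root :: "'i node \<Rightarrow> bool" where
  "is_root x \<longleftrightarrow> (\<exists>a. x = Root a)"

record ('i, 'c, 'r) forest =
  nodes :: "'i node set"
  edges :: "('i node \<times> 'i node) set"
  lab   :: "'i node \<Rightarrow> ('c, 'r) concept set"
  elab  :: "'i node \<Rightarrow> 'i node \<Rightarrow> 'r role set"
  neqr  :: "('i node \<times> 'i node) set"
  eqr   :: "('i node \<times> 'i node) set"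

definition init_forest :: "('i, 'c, 'r) assertion set \<Rightarrow> ('i, 'c, 'r) forest" where
  "init_forest Ab = \<lparr> nodes = Root ` individuals Ab,
      edges = {(Root a, Root b) | a b. \<exists>R. RAssert a b R \<in> Ab},
      lab = (\<lambda>x. case x of Root a \<Rightarrow> {C. CAssert a C \<in> Ab} | New k \<Rightarrow> {}),
      elab = (\<lambda>x y. case (x, y) of (Root a, Root b) \<Rightarrow> {R. RAssert a b R \<in> Ab} | _ \<Rightarrow> {}),
      neqr = {(Root a, Root b) | a b. NeqAssert a b \<in> Ab \<or> NeqAssert b a \<in> Ab},
      eqr = {} \<rparr>"

definition succ_r :: "('r role \<times> 'r role) set \<Rightarrow> ('i, 'c, 'r) forest \<Rightarrow> 'i node \<Rightarrow> 'i node \<Rightarrow> 'r role \<Rightarrow> bool" where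
  "succ_r Rh F x y S \<longleftrightarrow> (x, y) \<in> edges F \<and> (\<exists>R \<in> elab F x y. subrole Rh R S)"

definition nbr :: "('r role \<times> 'r role) set \<Rightarrow> ('i, 'c, 'r) forest \<Rightarrow> 'i node \<Rightarrow> 'i node \<Rightarrow> 'r role \<Rightarrow> bool" where
  "nbr Rh F x y S \<longleftrightarrow> succ_r Rh F x y S \<or> succ_r Rh F y x (inv S)"

definition is_succ :: "('r role \<times> 'r role) set \<Rightarrow> ('i, 'c, 'r) forest \<Rightarrow> 'i node \<Rightarrow> 'i node \<Rightarrow> bool" where
  "is_succ Rh F x y \<longleftrightarrow> (\<exists>S. succ_r Rh F x y S)"

definition ancestor :: "('r role \<times> 'r role) set \<Rightarrow> ('i, 'c, 'r) forest \<Rightarrow> 'i node \<Rightarrow> 'i node \<Rightarrow> bool" where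
  "ancestor Rh F a x \<longleftrightarrow> (a, x) \<in> {(u, v). is_succ Rh F u v}\<^sup>+"

definition SF :: "('r role \<times> 'r role) set \<Rightarrow> ('i, 'c, 'r) forest \<Rightarrow> 'i node \<Rightarrow> 'r role \<Rightarrow> ('c, 'r) concept \<Rightarrow> 'i node set" where
  "SF Rh F x S C = {y. nbr Rh F x y S \<and> C \<in> lab F y}"

definition dblock_cond :: "('r role \<times> 'r role) set \<Rightarrow> ('i, 'c, 'r) forest \<Rightarrow> 'i node \<Rightarrow> bool" where
  "dblock_cond Rh F x \<longleftrightarrow> (\<exists>x' y y'. ancestor Rh F x' x \<and> ancestor Rh F y x \<and> ancestor Rh F y' x
      \<and> \<not> is_root y \<and> is_succ Rh F x' x \<and> is_succ Rh F y' y
      \<and> lab F x = lab F y \<and> lab F x' = lab F y' \<and> elab F x' x = elab F y' y)"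

definition empty_edge_cond :: "('i, 'c, 'r) forest \<Rightarrow> 'i node \<Rightarrow> bool" where
  "empty_edge_cond F x \<longleftrightarrow> (\<exists>u. (u, x) \<in> edges F \<and> elab F u x = {})"

text \<open>Blocking (closed form of the mutually recursive definition).\<close>
definition blocked :: "('r role \<times> 'r role) set \<Rightarrow> ('i, 'c, 'r) forest \<Rightarrow> 'i node \<Rightarrow> bool" where
  "blocked Rh F x \<longleftrightarrow> \<not> is_root x \<and>
     (\<exists>a. (a = x \<or> ancestor Rh F a x) \<and> \<not> is_root a \<and> (dblock_cond Rh F a \<or> empty_edge_cond F a))"

definition directly_blocked :: "('r role \<times> 'r role) set \<Rightarrow> ('i, 'c, 'r) forest \<Rightarrow> 'i node \<Rightarrow> bool" where
  "directly_blocked Rh F x \<longleftrightarrow> (\<forall>a. ancestor Rh F a x \<longrightarrow> \<not> blocked Rh F a) \<and> dblock_cond Rh F x"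

definition indirectly_blocked :: "('r role \<times> 'r role) set \<Rightarrow> ('i, 'c, 'r) forest \<Rightarrow> 'i node \<Rightarrow> bool" where
  "indirectly_blocked Rh F x \<longleftrightarrow> (\<exists>a. ancestor Rh F a x \<and> blocked Rh F a) \<or> empty_edge_cond F x"

definition add_lab :: "('i, 'c, 'r) forest \<Rightarrow> 'i node \<Rightarrow> ('c, 'r) concept set \<Rightarrow> ('i, 'c, 'r) forest" where
  "add_lab F x Cs = F\<lparr>lab := (lab F)(x := lab F x \<union> Cs)\<rparr>"

definition add_elab :: "('i, 'c, 'r) forest \<Rightarrow> 'i node \<Rightarrow> 'i node \<Rightarrow> 'r role set \<Rightarrow> ('i, 'c, 'r) forest" where
  "add_elab F u v Rs = F\<lparr>edges := insert (u, v) (edges F),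
     elab := (elab F)(u := (elab F u)(v := (if (u, v) \<in> edges F then elab F u v else {}) \<union> Rs))\<rparr>"

definition and_rule :: "('r role \<times> 'r role) set \<Rightarrow> ('i, 'c, 'r) forest \<Rightarrow> ('i, 'c, 'r) forest \<Rightarrow> bool" where
  "and_rule Rh F F' \<longleftrightarrow> (\<exists>x C1 C2. x \<in> nodes F \<and> CAnd C1 C2 \<in> lab F x \<and> \<not> indirectly_blocked Rh F x
     \<and> \<not> {C1, C2} \<subseteq> lab F x \<and> F' = add_lab F x {C1, C2})"

definition or_rule :: "('r role \<times> 'r role) set \<Rightarrow> ('i, 'c, 'r) forest \<Rightarrow> ('i, 'c, 'r) forest \<Rightarrow> bool" where
  "or_rule Rh F F' \<longleftrightarrow> (\<exists>x C1 C2. x \<in> nodes F \<and> COr C1 C2 \<in> lab F x \<and> \<not> indirectly_blocked Rh F x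
     \<and> {C1, C2} \<inter> lab F x = {} \<and> (F' = add_lab F x {C1} \<or> F' = add_lab F x {C2}))"

definition ex_rule :: "('r role \<times> 'r role) set \<Rightarrow> ('i, 'c, 'r) forest \<Rightarrow> ('i, 'c, 'r) forest \<Rightarrow> bool" where
  "ex_rule Rh F F' \<longleftrightarrow> (\<exists>x S C k. x \<in> nodes F \<and> CEx S C \<in> lab F x \<and> \<not> blocked Rh F x
     \<and> \<not> (\<exists>y. nbr Rh F x y S \<and> C \<in> lab F y) \<and> New k \<notin> nodes F
     \<and> F' = F\<lparr>nodes := insert (New k) (nodes F), edges := insert (x, New k) (edges F),
               lab := (lab F)(New k := {C}), elab := (elab F)(x := (elab F x)(New k := {S}))\<rparr>)"

definition all_rule :: "('r role \<times> 'r role) set \<Rightarrow> ('i, 'c, 'r) forest \<Rightarrow> ('i, 'c, 'r) forest \<Rightarrow> bool" where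
  "all_rule Rh F F' \<longleftrightarrow> (\<exists>x S C y. x \<in> nodes F \<and> CAll S C \<in> lab F x \<and> \<not> indirectly_blocked Rh F x
     \<and> nbr Rh F x y S \<and> C \<notin> lab F y \<and> F' = add_lab F y {C})"

definition all_plus_rule :: "'r set \<Rightarrow> ('r role \<times> 'r role) set \<Rightarrow> ('i, 'c, 'r) forest \<Rightarrow> ('i, 'c, 'r) forest \<Rightarrow> bool" where
  "all_plus_rule Tr Rh F F' \<longleftrightarrow> (\<exists>x S C R y. x \<in> nodes F \<and> CAll S C \<in> lab F x \<and> \<not> indirectly_blocked Rh F x
     \<and> Trans Tr R \<and> subrole Rh R S \<and> nbr Rh F x y R \<and> CAll R C \<notin> lab F y
     \<and> F' = add_lab F y {CAll R C})"

definition choose_rule :: "'c \<Rightarrow> ('r role \<times> 'r role) set \<Rightarrow> ('i, 'c, 'r) forest \<Rightarrow> ('i, 'c, 'r) forest \<Rightarrow> bool" where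
  "choose_rule A0 Rh F F' \<longleftrightarrow> (\<exists>x n S C y. x \<in> nodes F
     \<and> (CAtMost n S C \<in> lab F x \<or> CAtLeast n S C \<in> lab F x) \<and> \<not> indirectly_blocked Rh F x
     \<and> nbr Rh F x y S \<and> {C, sim A0 C} \<inter> lab F y = {}
     \<and> (F' = add_lab F y {C} \<or> F' = add_lab F y {sim A0 C}))"

definition ge_rule :: "('r role \<times> 'r role) set \<Rightarrow> ('i, 'c, 'r) forest \<Rightarrow> ('i, 'c, 'r) forest \<Rightarrow> bool" where
  "ge_rule Rh F F' \<longleftrightarrow> (\<exists>x n S C ks. x \<in> nodes F \<and> CAtLeast n S C \<in> lab F x \<and> \<not> blocked Rh F x
     \<and> \<not> (\<exists>ys. (\<forall>i<n. nbr Rh F x (ys i) S \<and> C \<in> lab F (ys i))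
              \<and> (\<forall>i j. i < j \<and> j < n \<longrightarrow> (ys i, ys j) \<in> neqr F))
     \<and> inj_on ks {..<n} \<and> (\<forall>i<n. New (ks i) \<notin> nodes F)
     \<and> F' = F\<lparr>nodes := nodes F \<union> {New (ks i) | i. i < n},
               edges := edges F \<union> {(x, New (ks i)) | i. i < n},
               lab := (\<lambda>v. if (\<exists>i<n. v = New (ks i)) then {C} else lab F v),
               elab := (\<lambda>u v. if u = x \<and> (\<exists>i<n. v = New (ks i)) then {S} else elab F u v),
               neqr := neqr F \<union> {(New (ks i), New (ks j)) | i j. i < n \<and> j < n \<and> i \<noteq> j}\<rparr>)"

definition le_merge :: "('r role \<times> 'r role) set \<Rightarrow> ('i, 'c, 'r) forest \<Rightarrow> 'i node \<Rightarrow> 'i node \<Rightarrow> 'i node \<Rightarrow> ('i, 'c, 'r) forest" where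
  "le_merge Rh F x y z =
    (let F1 = add_lab F z (lab F y);
         F2 = (if ancestor Rh F z x then add_elab F1 z x (inv ` elab F x y)
               else add_elab F1 x z (elab F x y));
         F3 = F2\<lparr>elab := (elab F2)(x := (elab F2 x)(y := {}))\<rparr>
     in F3\<lparr>neqr := neqr F3 \<union> {(u, z) | u. (u, y) \<in> neqr F3} \<union> {(z, u) | u. (u, y) \<in> neqr F3}\<rparr>)"

definition le_rule :: "('r role \<times> 'r role) set \<Rightarrow> ('i, 'c, 'r) forest \<Rightarrow> ('i, 'c, 'r) forest \<Rightarrow> bool" where
  "le_rule Rh F F' \<longleftrightarrow> (\<exists>x n S C y z. x \<in> nodes F \<and> CAtMost n S C \<in> lab F x \<and> \<not> indirectly_blocked Rh F x
     \<and> card (SF Rh F x S C) > n \<and> nbr Rh F x y S \<and> nbr Rh F x z S \<and> y \<noteq> z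
     \<and> (y, z) \<notin> neqr F \<and> \<not> is_root y \<and> \<not> ancestor Rh F y z \<and> C \<in> lab F y \<and> C \<in> lab F z
     \<and> F' = le_merge Rh F x y z)"

definition ler_merge :: "('i, 'c, 'r) forest \<Rightarrow> 'i node \<Rightarrow> 'i node \<Rightarrow> ('i, 'c, 'r) forest" where
  "ler_merge F y z =
    (let F1 = add_lab F z (lab F y);
         F2 = F1\<lparr>edges := edges F1 \<union> {(z, w) | w. (y, w) \<in> edges F1},
                 elab := (\<lambda>u w. if u = z \<and> (y, w) \<in> edges F1
                                 then (if (z, w) \<in> edges F1 then elab F1 z w else {}) \<union> elab F1 y w
                                 else elab F1 u w)\<rparr>;
         F3 = F2\<lparr>edges := edges F2 \<union> {(w, z) | w. (w, y) \<in> edges F2},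
                 elab := (\<lambda>w u. if u = z \<and> (w, y) \<in> edges F2
                                 then (if (w, z) \<in> edges F2 then elab F2 w z else {}) \<union> elab F2 w y
                                 else elab F2 w u)\<rparr>;
         F4 = F3\<lparr>lab := (lab F3)(y := {}),
                 edges := {e \<in> edges F3. fst e \<noteq> y \<and> snd e \<noteq> y}\<rparr>
     in F4\<lparr>neqr := neqr F4 \<union> {(u, z) | u. (u, y) \<in> neqr F4} \<union> {(z, u) | u. (u, y) \<in> neqr F4},
           eqr := eqr F4 \<union> {(y, z), (z, y)}\<rparr>)"

definition ler_rule :: "('r role \<times> 'r role) set \<Rightarrow> ('i, 'c, 'r) forest \<Rightarrow> ('i, 'c, 'r) forest \<Rightarrow> bool" where
  "ler_rule Rh F F' \<longleftrightarrow> (\<exists>x n S C y z. x \<in> nodes F \<and> CAtMost n S C \<in> lab F x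
     \<and> card (SF Rh F x S C) > n \<and> nbr Rh F x y S \<and> nbr Rh F x z S \<and> y \<noteq> z
     \<and> is_root y \<and> is_root z \<and> C \<in> lab F y \<and> C \<in> lab F z \<and> (y, z) \<notin> neqr F
     \<and> F' = ler_merge F y z)"

definition step :: "'c \<Rightarrow> 'r set \<Rightarrow> ('r role \<times> 'r role) set \<Rightarrow> ('i, 'c, 'r) forest \<Rightarrow> ('i, 'c, 'r) forest \<Rightarrow> bool" where
  "step A0 Tr Rh F F' \<longleftrightarrow> and_rule Rh F F' \<or> or_rule Rh F F' \<or> ex_rule Rh F F' \<or> all_rule Rh F F'
     \<or> all_plus_rule Tr Rh F F' \<or> choose_rule A0 Rh F F' \<or> ge_rule Rh F F' \<or> le_rule Rh F F'
     \<or> ler_rule Rh F F'"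

definition clash :: "('r role \<times> 'r role) set \<Rightarrow> ('i, 'c, 'r) forest \<Rightarrow> bool" where
  "clash Rh F \<longleftrightarrow> (\<exists>x \<in> nodes F.
     (\<exists>A. CName A \<in> lab F x \<and> CNeg (CName A) \<in> lab F x)
   \<or> (\<exists>n S C ys. CAtMost n S C \<in> lab F x
        \<and> (\<forall>i\<le>n. nbr Rh F x (ys i) S \<and> C \<in> lab F (ys i))
        \<and> (\<forall>i j. i < j \<and> j \<le> n \<longrightarrow> (ys i, ys j) \<in> neqr F)))"

end

theory Submission
  imports Defs
begin

text \<open>All node labels stay inside a finite closure of the Abox concepts and all edge labels
  inside a finite set of roles. Blocking bounds the depth of the trees: a path of non-root
  nodes that is longer than the number of (parent label, node label, edge label) triples
  repeats a triple, so its lower end is blocked and generates nothing. The out-degree is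
  bounded too, because every child of a node was created for a demand \<open>\<exists>S.C\<close> or
  \<open>(\<ge> n S C)\<close> of that node which has been satisfied ever since; merging keeps
  demands satisfied, and a pruned node or a merged-away root counts as satisfying everything.
  So the forest stays below a fixed size, and every rule application decreases,
  lexicographically, the number of nodes that may still be created, the number of live roots
  (\<open>\<le>\<^sub>r\<close>-rule), the number of unpruned nodes (\<open>\<le>\<close>-rule) and the number of
  concepts that may still be added to labels (all other rules).\<close>

subsection \<open>Subconcepts and the closure of an Abox\<close>

fun subconcepts :: "('c, 'r) concept \<Rightarrow> ('c, 'r) concept set" where
  "subconcepts (CName A) = {CName A}"
| "subconcepts (CNeg C) = insert (CNeg C) (subconcepts C)"
| "subconcepts (CAnd C D) = insert (CAnd C D) (subconcepts C \<union> subconcepts D)"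
| "subconcepts (COr C D) = insert (COr C D) (subconcepts C \<union> subconcepts D)"
| "subconcepts (CAll R C) = insert (CAll R C) (subconcepts C)"
| "subconcepts (CEx R C) = insert (CEx R C) (subconcepts C)"
| "subconcepts (CAtLeast n R C) = insert (CAtLeast n R C) (subconcepts C)"
| "subconcepts (CAtMost n R C) = insert (CAtMost n R C) (subconcepts C)"

lemma finite_subconcepts [simp]: "finite (subconcepts C)"
  by (induction C) auto

lemma subconcepts_refl [simp]: "C \<in> subconcepts C"
  by (cases C) auto

lemma subconcepts_trans: "D \<in> subconcepts C \<Longrightarrow> subconcepts D \<subseteq> subconcepts C"
  by (induction C) auto

lemma is_nnf_subconcepts: "is_nnf C \<Longrightarrow> D \<in> subconcepts C \<Longrightarrow> is_nnf D"
  by (induction C rule: is_nnf.induct) auto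

lemma nnf_is_nnf_id: "is_nnf C \<Longrightarrow> nnf A0 C = C"
  by (induction C rule: is_nnf.induct) auto

fun qualifier :: "('c, 'r) concept \<Rightarrow> ('c, 'r) concept set" where
  "qualifier (CAtMost n S C) = {C}"
| "qualifier (CAtLeast n S C) = {C}"
| "qualifier _ = {}"

definition qualifiers :: "('c, 'r) concept set \<Rightarrow> ('c, 'r) concept set" where
  "qualifiers X = (\<Union>C\<in>X. qualifier C)"

lemma qualifiers_simps [simp]:
  "qualifiers {} = {}"
  "qualifiers (insert C X) = qualifier C \<union> qualifiers X"
  "qualifiers (X \<union> Y) = qualifiers X \<union> qualifiers Y"
  unfolding qualifiers_def by auto

lemma qualifiers_mono: "X \<subseteq> Y \<Longrightarrow> qualifiers X \<subseteq> qualifiers Y"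
  unfolding qualifiers_def by blast

lemma qualifiers_subconcepts_neg_nnf:
  "is_nnf C \<Longrightarrow> qualifiers (subconcepts (neg_nnf A0 C)) \<subseteq> qualifiers (subconcepts C)"
  by (induction C rule: is_nnf.induct) (auto simp: nnf_is_nnf_id)

definition subconcept_closed :: "('c, 'r) concept set \<Rightarrow> bool" where
  "subconcept_closed X \<longleftrightarrow> (\<forall>C\<in>X. subconcepts C \<subseteq> X)"

lemma qualifiers_subset:
  assumes "subconcept_closed X"
  shows "qualifiers X \<subseteq> X"
proof
  fix C
  assume "C \<in> qualifiers X"
  then obtain Y where "Y \<in> X" "C \<in> qualifier Y"
    unfolding qualifiers_def by blast
  moreover from \<open>C \<in> qualifier Y\<close> have "C \<in> subconcepts Y"
    by (cases Y) auto
  ultimately show "C \<in> X"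
    using assms unfolding subconcept_closed_def by blast
qed

definition abox_concepts :: "('i, 'c, 'r) assertion set \<Rightarrow> ('c, 'r) concept set" where
  "abox_concepts Ab = (\<Union>C\<in>{C. \<exists>a. CAssert a C \<in> Ab}. subconcepts C)"

definition neg_closure :: "'c \<Rightarrow> ('i, 'c, 'r) assertion set \<Rightarrow> ('c, 'r) concept set" where
  "neg_closure A0 Ab =
     abox_concepts Ab \<union> (\<Union>C\<in>qualifiers (abox_concepts Ab). subconcepts (neg_nnf A0 C))"

definition hierarchy_roles :: "('r role \<times> 'r role) set \<Rightarrow> 'r role set" where
  "hierarchy_roles Rh = fst ` Rh \<union> inv ` fst ` Rh"

text \<open>The part of the paper's \<open>clos(\<A>)\<close> that the rules can reach: besides subconcepts,
  the choose rule needs \<open>\<sim>C\<close> for qualifying concepts \<open>C\<close>, and the \<open>\<forall>\<^sub>+\<close>-rule needs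
  \<open>\<forall>R.C\<close> for the sub-roles \<open>R\<close> of \<open>S\<close> in \<open>\<forall>S.C\<close>.\<close>
definition concept_closure ::
    "'c \<Rightarrow> ('r role \<times> 'r role) set \<Rightarrow> ('i, 'c, 'r) assertion set \<Rightarrow> ('c, 'r) concept set" where
  "concept_closure A0 Rh Ab = neg_closure A0 Ab
     \<union> {CAll R C | R C. R \<in> hierarchy_roles Rh \<and> (\<exists>S. CAll S C \<in> neg_closure A0 Ab)}"

lemma subconcept_closed_abox_concepts: "subconcept_closed (abox_concepts Ab)"
  unfolding subconcept_closed_def abox_concepts_def using subconcepts_trans by fastforce

lemma subconcept_closed_neg_closure: "subconcept_closed (neg_closure A0 Ab)"
  unfolding subconcept_closed_def neg_closure_def abox_concepts_def
  using subconcepts_trans by fastforce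

lemma finite_abox_concepts:
  assumes "finite Ab"
  shows "finite (abox_concepts Ab)"
proof -
  have "{C. \<exists>a. CAssert a C \<in> Ab} \<subseteq> (\<lambda>x. case x of CAssert a C \<Rightarrow> C | _ \<Rightarrow> undefined) ` Ab"
    by (auto intro: rev_image_eqI)
  then have "finite {C. \<exists>a. CAssert a C \<in> Ab}"
    by (rule finite_subset) (use assms in simp)
  then show ?thesis
    unfolding abox_concepts_def by simp
qed

lemma finite_neg_closure:
  assumes "finite Ab"
  shows "finite (neg_closure A0 Ab)"
proof -
  have "finite (qualifiers (abox_concepts Ab))"
    using finite_abox_concepts[OF assms] qualifiers_subset[OF subconcept_closed_abox_concepts]
    by (rule finite_subset[rotated])
  then show ?thesis
    unfolding neg_closure_def using finite_abox_concepts[OF assms] by simp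
qed

lemma neg_closure_all:
  assumes "CAll S C \<in> neg_closure A0 Ab"
  shows "C \<in> neg_closure A0 Ab"
proof -
  have "subconcepts (CAll S C) \<subseteq> neg_closure A0 Ab"
    using assms subconcept_closed_neg_closure[of A0 Ab] unfolding subconcept_closed_def by blast
  then show ?thesis
    by auto
qed

lemma finite_concept_closure:
  assumes "finite Ab" and "finite Rh"
  shows "finite (concept_closure A0 Rh Ab)"
proof -
  let ?A = "{CAll R C | R C. R \<in> hierarchy_roles Rh \<and> (\<exists>S. CAll S C \<in> neg_closure A0 Ab)}"
  have sub: "?A \<subseteq> (\<lambda>(R, C). CAll R C) ` (hierarchy_roles Rh \<times> neg_closure A0 Ab)"
  proof
    fix X
    assume "X \<in> ?A"
    then obtain R C S where "X = CAll R C" "R \<in> hierarchy_roles Rh" "CAll S C \<in> neg_closure A0 Ab"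
      by blast
    then show "X \<in> (\<lambda>(R, C). CAll R C) ` (hierarchy_roles Rh \<times> neg_closure A0 Ab)"
      using neg_closure_all[of S C A0 Ab] by (auto intro: rev_image_eqI[of "(R, C)"])
  qed
  have "finite ((\<lambda>(R, C). CAll R C) ` (hierarchy_roles Rh \<times> neg_closure A0 Ab))"
    using assms finite_neg_closure[OF assms(1), of A0] unfolding hierarchy_roles_def by simp
  then have "finite ?A"
    using sub by (rule finite_subset[rotated])
  then show ?thesis
    unfolding concept_closure_def using finite_neg_closure[OF assms(1)] by simp
qed

lemma inv_inv [simp]: "inv (inv R) = R"
  by (cases R) auto

lemma subrole_refl: "subrole Rh R R"
  unfolding subrole_def by auto

lemma subrole_hierarchy_roles:
  assumes "subrole Rh R S"
  shows "R = S \<or> R \<in> hierarchy_roles Rh"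
  using assms[unfolded subrole_def]
proof (cases rule: converse_rtranclE)
  case (step R')
  then show ?thesis
    unfolding hierarchy_roles_def by (auto intro: rev_image_eqI)
qed simp

lemma subrole_inv:
  assumes "subrole Rh R S"
  shows "subrole Rh (inv R) (inv S)"
proof -
  let ?X = "Rh \<union> {(inv R', inv S') | R' S'. (R', S') \<in> Rh}"
  have "(inv R, inv S) \<in> ?X\<^sup>*"
    using assms[unfolded subrole_def]
  proof (induction rule: rtrancl_induct)
    case (step y z)
    have "(inv y, inv z) \<in> ?X"
    proof (cases "(y, z) \<in> Rh")
      case False
      then obtain R' S' where "y = inv R'" "z = inv S'" "(R', S') \<in> Rh"
        using step(2) by blast
      then show ?thesis
        by simp
    qed blast
    then show ?case
      using step.IH by (rule rtrancl_into_rtrancl[rotated])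
  qed simp
  then show ?thesis
    unfolding subrole_def .
qed

lemma is_nnf_abox_concepts:
  assumes "\<And>a C. CAssert a C \<in> Ab \<Longrightarrow> is_nnf C" and "D \<in> abox_concepts Ab"
  shows "is_nnf D"
proof -
  obtain a C where "CAssert a C \<in> Ab" and "D \<in> subconcepts C"
    using assms(2) unfolding abox_concepts_def by blast
  then show ?thesis
    by (rule is_nnf_subconcepts[OF assms(1)])
qed

context
  fixes A0 :: 'c and Rh :: "('r role \<times> 'r role) set" and Ab :: "('i, 'c, 'r) assertion set"
begin

lemma concept_closure_subconcept:
  assumes "X \<in> concept_closure A0 Rh Ab" and "\<And>R C. X \<noteq> CAll R C" and "Y \<in> subconcepts X"
  shows "Y \<in> concept_closure A0 Rh Ab"
proof -
  have "X \<in> neg_closure A0 Ab"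
    using assms(1,2) unfolding concept_closure_def by auto
  then show ?thesis
    using assms(3) subconcept_closed_neg_closure[of A0 Ab]
    unfolding concept_closure_def subconcept_closed_def by blast
qed

lemma concept_closure_all:
  "CAll S C \<in> concept_closure A0 Rh Ab \<Longrightarrow> C \<in> concept_closure A0 Rh Ab"
  unfolding concept_closure_def using neg_closure_all[of _ C A0 Ab] by fastforce

lemma concept_closure_all_subrole:
  "CAll S C \<in> concept_closure A0 Rh Ab \<Longrightarrow> subrole Rh R S \<Longrightarrow> CAll R C \<in> concept_closure A0 Rh Ab"
  using subrole_hierarchy_roles[of Rh R S] unfolding concept_closure_def by auto

lemma concept_closure_neg_qualifier:
  assumes nnf: "\<And>a C. CAssert a C \<in> Ab \<Longrightarrow> is_nnf C"
    and X: "X \<in> concept_closure A0 Rh Ab" and C: "C \<in> qualifier X"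
  shows "sim A0 C \<in> concept_closure A0 Rh Ab"
proof -
  let ?B = "abox_concepts Ab"
  have "X \<in> neg_closure A0 Ab"
    using X C unfolding concept_closure_def by (cases X) auto
  then consider "X \<in> ?B" | D where "D \<in> qualifiers ?B" "X \<in> subconcepts (neg_nnf A0 D)"
    unfolding neg_closure_def by blast
  then have "C \<in> qualifiers ?B"
  proof cases
    case 1
    show ?thesis
      unfolding qualifiers_def by (rule UN_I[where B = qualifier, OF 1 C])
  next
    case (2 D)
    have DB: "D \<in> ?B"
      using 2(1) qualifiers_subset[OF subconcept_closed_abox_concepts] by blast
    have "is_nnf D"
      using nnf DB by (rule is_nnf_abox_concepts)
    moreover have "C \<in> qualifiers (subconcepts (neg_nnf A0 D))"
      unfolding qualifiers_def by (rule UN_I[where B = qualifier, OF 2(2) C])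
    ultimately have "C \<in> qualifiers (subconcepts D)"
      using qualifiers_subconcepts_neg_nnf[of D A0] by blast
    moreover have "subconcepts D \<subseteq> ?B"
      using DB subconcept_closed_abox_concepts[of Ab] unfolding subconcept_closed_def by blast
    ultimately show ?thesis
      using qualifiers_mono[of "subconcepts D" ?B] by blast
  qed
  then show ?thesis
    using subconcepts_refl[of "neg_nnf A0 C"]
    unfolding sim_def concept_closure_def neg_closure_def by blast
qed

end

definition generating_roles ::
    "'c \<Rightarrow> ('r role \<times> 'r role) set \<Rightarrow> ('i, 'c, 'r) assertion set \<Rightarrow> 'r role set" where
  "generating_roles A0 Rh Ab = {R. \<exists>a b. RAssert a b R \<in> Ab}
     \<union> {S. \<exists>C. CEx S C \<in> concept_closure A0 Rh Ab}
     \<union> {S. \<exists>n C. CAtLeast n S C \<in> concept_closure A0 Rh Ab}"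

definition edge_roles ::
    "'c \<Rightarrow> ('r role \<times> 'r role) set \<Rightarrow> ('i, 'c, 'r) assertion set \<Rightarrow> 'r role set" where
  "edge_roles A0 Rh Ab = generating_roles A0 Rh Ab \<union> inv ` generating_roles A0 Rh Ab"

lemma edge_roles_inv: "R \<in> edge_roles A0 Rh Ab \<Longrightarrow> inv R \<in> edge_roles A0 Rh Ab"
  unfolding edge_roles_def by (auto intro: rev_image_eqI)

lemma finite_edge_roles:
  assumes "finite Ab" and "finite Rh"
  shows "finite (edge_roles A0 Rh Ab)"
proof -
  have "{R. \<exists>a b. RAssert a b R \<in> Ab}
      \<subseteq> (\<lambda>x. case x of RAssert a b R \<Rightarrow> R | _ \<Rightarrow> undefined) ` Ab"
    by (auto intro: rev_image_eqI)
  moreover have "{S. \<exists>C. CEx S C \<in> concept_closure A0 Rh Ab}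
      \<union> {S. \<exists>n C. CAtLeast n S C \<in> concept_closure A0 Rh Ab}
      \<subseteq> (\<lambda>x. case x of CEx S C \<Rightarrow> S | CAtLeast n S C \<Rightarrow> S | _ \<Rightarrow> undefined)
          ` concept_closure A0 Rh Ab"
    by (auto intro: rev_image_eqI)
  ultimately have "finite (generating_roles A0 Rh Ab)"
    unfolding generating_roles_def Un_assoc[symmetric]
    using finite_concept_closure[OF assms] assms(1)
    by (metis (no_types, lifting) finite_Un finite_imageI finite_subset)
  then show ?thesis
    unfolding edge_roles_def by simp
qed

subsection \<open>Completion forests\<close>

lemma is_root_simps [simp]: "is_root (Root a)" "\<not> is_root (New k)"
  unfolding is_root_def by auto

lemma is_succ_edge: "is_succ Rh F u v \<Longrightarrow> (u, v) \<in> edges F"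
  unfolding is_succ_def succ_r_def by auto

lemma is_succ_iff: "is_succ Rh F u v \<longleftrightarrow> (u, v) \<in> edges F \<and> elab F u v \<noteq> {}"
  unfolding is_succ_def succ_r_def using subrole_refl by fastforce

lemma nbr_edge: "nbr Rh F x y S \<Longrightarrow> (x, y) \<in> edges F \<or> (y, x) \<in> edges F"
  unfolding nbr_def succ_r_def by auto

lemma ancestor_succ_trans: "ancestor Rh F a x \<Longrightarrow> is_succ Rh F x y \<Longrightarrow> ancestor Rh F a y"
  unfolding ancestor_def by (simp add: trancl_into_trancl)

lemma ancestor_chain:
  assumes "\<And>k. i \<le> k \<Longrightarrow> k < j \<Longrightarrow> is_succ Rh F (p k) (p (Suc k))" and "i < j"
  shows "ancestor Rh F (p i) (p j)"
  using assms
proof (induction j)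
  case (Suc j)
  have "is_succ Rh F (p j) (p (Suc j))"
    using Suc.prems by simp
  moreover have "p i = p j \<or> ancestor Rh F (p i) (p j)"
    using Suc by (cases "i = j") auto
  ultimately show ?case
    unfolding ancestor_def by (auto intro: trancl_into_trancl)
qed simp

lemma ancestor_root:
  assumes "\<And>u v. (u, v) \<in> edges F \<Longrightarrow> is_root v \<Longrightarrow> is_root u"
    and "ancestor Rh F a v" and "is_root v"
  shows "is_root a"
  using assms(2)[unfolded ancestor_def] assms(3)
  by (induction rule: converse_trancl_induct) (use assms(1) is_succ_edge in blast)+

definition inner_edges :: "('i, 'c, 'r) forest \<Rightarrow> ('i node \<times> 'i node) set" where
  "inner_edges F = {(u, v). (u, v) \<in> edges F \<and> \<not> is_root u}"

lemma ancestor_inner_edges: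
  assumes "\<And>u v. (u, v) \<in> edges F \<Longrightarrow> is_root v \<Longrightarrow> is_root u"
    and "ancestor Rh F a v" and "\<not> is_root a"
  shows "(a, v) \<in> (inner_edges F)\<^sup>+"
  using assms(2)[unfolded ancestor_def] assms(3)
proof (induction rule: converse_trancl_induct)
  case (base y)
  then show ?case
    using is_succ_edge unfolding inner_edges_def by fastforce
next
  case (step y z)
  have "(y, z) \<in> edges F"
    using step(1) is_succ_edge by fastforce
  then have "(y, z) \<in> inner_edges F" and "\<not> is_root z"
    using assms(1) step(4) unfolding inner_edges_def by blast+
  then show ?case
    using step(3) by (meson trancl_into_trancl2)
qed

text \<open>A pruned node is one merged away by the \<open>\<le>\<close>-rule: its incoming edge has lost its
  label.\<close>
definition pruned :: "('i, 'c, 'r) forest \<Rightarrow> 'i node \<Rightarrow> bool" where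
  "pruned F v \<longleftrightarrow> \<not> is_root v \<and> empty_edge_cond F v"

definition removed_root :: "('i, 'c, 'r) forest \<Rightarrow> 'i node \<Rightarrow> bool" where
  "removed_root F x \<longleftrightarrow> is_root x \<and> lab F x = {} \<and> (\<forall>w. (x, w) \<notin> edges F \<and> (w, x) \<notin> edges F)"

lemma not_removed_root_nbr: "nbr Rh F x y S \<Longrightarrow> \<not> removed_root F y"
  using nbr_edge unfolding removed_root_def by blast

lemma blocked_succ:
  assumes "blocked Rh F x" and "is_succ Rh F x y" and "\<not> is_root y"
  shows "blocked Rh F y"
proof -
  obtain a where a: "a = x \<or> ancestor Rh F a x" "\<not> is_root a"
      "dblock_cond Rh F a \<or> empty_edge_cond F a"
    using assms(1) unfolding blocked_def by blast
  have "ancestor Rh F a y"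
    using a(1) assms(2) ancestor_succ_trans[of Rh F a x y] unfolding ancestor_def by blast
  then show ?thesis
    using a(2,3) assms(3) unfolding blocked_def by blast
qed

fun demand :: "('c, 'r) concept \<Rightarrow> nat" where
  "demand (CEx S C) = 1"
| "demand (CAtLeast n S C) = n"
| "demand _ = 0"

fun satisfies ::
    "('r role \<times> 'r role) set \<Rightarrow> ('i, 'c, 'r) forest \<Rightarrow> 'i node \<Rightarrow> ('c, 'r) concept \<Rightarrow> bool" where
  "satisfies Rh F x (CEx S C) \<longleftrightarrow> (\<exists>y. nbr Rh F x y S \<and> C \<in> lab F y)"
| "satisfies Rh F x (CAtLeast n S C) \<longleftrightarrow> (\<exists>ys. inj_on ys {..<n}
      \<and> (\<forall>i<n. nbr Rh F x (ys i) S \<and> C \<in> lab F (ys i))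
      \<and> (\<forall>i j. i < j \<and> j < n \<longrightarrow> (ys i, ys j) \<in> neqr F))"
| "satisfies Rh F x _ \<longleftrightarrow> True"

text \<open>Pruned nodes and removed roots lose their neighbours; counting all their demands as
  settled makes settledness persistent under every rule.\<close>
definition settled ::
    "('r role \<times> 'r role) set \<Rightarrow> ('i, 'c, 'r) forest \<Rightarrow> 'i node \<Rightarrow> ('c, 'r) concept \<Rightarrow> bool" where
  "settled Rh F x D \<longleftrightarrow> satisfies Rh F x D \<or> pruned F x \<or> removed_root F x"

lemma satisfies_transfer:
  assumes nbr: "\<And>w S. nbr Rh F x w S \<Longrightarrow> nbr Rh F' x' (\<psi> w) S"
    and lab: "\<And>w S. nbr Rh F x w S \<Longrightarrow> lab F w \<subseteq> lab F' (\<psi> w)"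
    and neq: "\<And>a b. (a, b) \<in> neqr F \<Longrightarrow> a \<noteq> b \<Longrightarrow> (\<psi> a, \<psi> b) \<in> neqr F' \<and> \<psi> a \<noteq> \<psi> b"
    and sym: "sym (neqr F)"
    and sat: "satisfies Rh F x D"
  shows "satisfies Rh F' x' D"
proof (cases D)
  case (CEx S C)
  then obtain y where y: "nbr Rh F x y S" "C \<in> lab F y"
    using sat by auto
  then have "nbr Rh F' x' (\<psi> y) S" and "C \<in> lab F' (\<psi> y)"
    using nbr lab by blast+
  then show ?thesis
    using CEx by auto
next
  case (CAtLeast n S C)
  then obtain ys where ys: "inj_on ys {..<n}" "\<forall>i<n. nbr Rh F x (ys i) S \<and> C \<in> lab F (ys i)"
      "\<forall>i j. i < j \<and> j < n \<longrightarrow> (ys i, ys j) \<in> neqr F"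
    using sat by auto
  have neq_ys: "(ys i, ys j) \<in> neqr F" "ys i \<noteq> ys j" if "i < n" "j < n" "i \<noteq> j" for i j
  proof -
    show "ys i \<noteq> ys j"
      using ys(1) that unfolding inj_on_def by blast
    show "(ys i, ys j) \<in> neqr F"
    proof (cases "i < j")
      case False
      then have "(ys j, ys i) \<in> neqr F"
        using ys(3) that by auto
      then show ?thesis
        using sym unfolding sym_def by blast
    qed (use ys(3) that in blast)
  qed
  have "inj_on (\<psi> \<circ> ys) {..<n}"
    by (rule inj_onI) (use neq neq_ys in fastforce)
  moreover have "\<forall>i<n. nbr Rh F' x' ((\<psi> \<circ> ys) i) S \<and> C \<in> lab F' ((\<psi> \<circ> ys) i)"
    using ys(2) nbr lab by fastforce
  moreover have "\<forall>i j. i < j \<and> j < n \<longrightarrow> ((\<psi> \<circ> ys) i, (\<psi> \<circ> ys) j) \<in> neqr F'"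
    using neq neq_ys by simp
  ultimately show ?thesis
    using CAtLeast by auto
qed auto

lemma satisfies_at_least:
  assumes "inj_on ys {..<n}" and "\<And>i. i < n \<Longrightarrow> nbr Rh F x (ys i) S"
    and "\<And>i. i < n \<Longrightarrow> C \<in> lab F (ys i)"
    and "\<And>i j. i < j \<Longrightarrow> j < n \<Longrightarrow> (ys i, ys j) \<in> neqr F"
  shows "satisfies Rh F x (CAtLeast n S C)"
  using assms by auto

definition children :: "('i, 'c, 'r) forest \<Rightarrow> 'i node \<Rightarrow> 'i node set" where
  "children F x = {v. (x, v) \<in> edges F \<and> \<not> is_root v}"

definition root_path :: "('i, 'c, 'r) forest \<Rightarrow> (nat \<Rightarrow> 'i node) \<Rightarrow> nat \<Rightarrow> bool" where
  "root_path F p m \<longleftrightarrow> p 0 \<in> nodes F \<and> is_root (p 0) \<and> (\<forall>j. 0 < j \<and> j \<le> m \<longrightarrow> \<not> is_root (p j))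
     \<and> (\<forall>j<m. (p j, p (Suc j)) \<in> edges F)"

lemma root_path_mono:
  "root_path F p m \<Longrightarrow> nodes F \<subseteq> nodes F' \<Longrightarrow> edges F \<subseteq> edges F' \<Longrightarrow> root_path F' p m"
  unfolding root_path_def by blast

lemma root_path_prefix: "root_path F p (Suc m) \<Longrightarrow> root_path F p m"
  unfolding root_path_def by auto

lemma root_path_empty_edge_blocked:
  assumes "root_path F p m" and "0 < j" and "j \<le> m" and "elab F (p (j - 1)) (p j) = {}"
  shows "blocked Rh F (p m)"
  using assms
proof (induction m)
  case (Suc m)
  have edge: "(p m, p (Suc m)) \<in> edges F" and nonroot: "\<not> is_root (p (Suc m))"
    using Suc.prems(1) unfolding root_path_def by auto
  show ?case
  proof (cases "elab F (p m) (p (Suc m)) = {}")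
    case True
    then have "empty_edge_cond F (p (Suc m))"
      using edge unfolding empty_edge_cond_def by blast
    then show ?thesis
      using nonroot unfolding blocked_def by blast
  next
    case False
    then have "j \<le> m"
      using Suc.prems(3,4) by (cases "j = Suc m") auto
    then have "blocked Rh F (p m)"
      using Suc.IH root_path_prefix Suc.prems by blast
    moreover have "is_succ Rh F (p m) (p (Suc m))"
      using edge False is_succ_iff by blast
    ultimately show ?thesis
      using nonroot by (rule blocked_succ)
  qed
qed simp

lemma root_path_repeated_blocked:
  assumes path: "root_path F p m"
    and nonempty: "\<And>k. k < m \<Longrightarrow> elab F (p k) (p (Suc k)) \<noteq> {}"
    and ij: "0 < i" "i < j" "j \<le> m"
    and eq: "lab F (p (i - 1)) = lab F (p (j - 1))" "lab F (p i) = lab F (p j)"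
      "elab F (p (i - 1)) (p i) = elab F (p (j - 1)) (p j)"
  shows "blocked Rh F (p m)"
proof -
  have succ: "is_succ Rh F (p k) (p (Suc k))" if "k < m" for k
  proof -
    have "(p k, p (Suc k)) \<in> edges F"
      using path that unfolding root_path_def by blast
    then show ?thesis
      by (simp add: is_succ_iff nonempty that)
  qed
  have anc: "ancestor Rh F (p a) (p b)" if "a < b" "b \<le> m" for a b
    using ancestor_chain[of a b Rh F p] succ that by simp
  have nonroot: "\<not> is_root (p k)" if "0 < k" "k \<le> m" for k
    using path that unfolding root_path_def by blast
  have "dblock_cond Rh F (p j)"
    unfolding dblock_cond_def
  proof (intro exI conjI)
    show "ancestor Rh F (p (j - 1)) (p j)" "ancestor Rh F (p i) (p j)"
      "ancestor Rh F (p (i - 1)) (p j)"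
      using anc ij by auto
    show "is_succ Rh F (p (j - 1)) (p j)" "is_succ Rh F (p (i - 1)) (p i)"
      using succ[of "j - 1"] succ[of "i - 1"] ij by auto
  qed (use eq nonroot ij in auto)
  moreover have "p j = p m \<or> ancestor Rh F (p j) (p m)"
    using anc[of j m] ij(3) by (cases "j = m") auto
  ultimately show ?thesis
    unfolding blocked_def using nonroot ij by (intro conjI exI[of _ "p j"]) auto
qed

lemma acyclic_Un_fresh:
  assumes "acyclic r" and "\<And>t. t \<in> T \<Longrightarrow> t \<notin> Domain r"
    and "\<And>a b. (a, b) \<in> Q \<Longrightarrow> b \<in> T \<and> a \<notin> T"
  shows "acyclic (r \<union> Q)"
proof -
  have key: "(a, b) \<in> r\<^sup>+ \<or> (a, b) \<in> r\<^sup>* O Q" if "(a, b) \<in> (r \<union> Q)\<^sup>+" for a b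
    using that
  proof (induction rule: trancl_induct)
    case (step y z)
    from step(3) show ?case
    proof
      assume "(a, y) \<in> r\<^sup>* O Q"
      then obtain c where "(c, y) \<in> Q"
        by blast
      then have "y \<notin> Domain r" "y \<notin> Domain Q"
        using assms(2,3) by blast+
      then show ?thesis
        using step(2) by blast
    qed (use step(2) in auto)
  qed auto
  show ?thesis
    unfolding acyclic_def
  proof
    fix x
    show "(x, x) \<notin> (r \<union> Q)\<^sup>+"
    proof
      assume "(x, x) \<in> (r \<union> Q)\<^sup>+"
      then consider "(x, x) \<in> r\<^sup>+" | c where "(x, c) \<in> r\<^sup>*" "(c, x) \<in> Q"
        using key by blast
      then show False
      proof cases
        case 1
        then show False
          using assms(1) unfolding acyclic_def by blast
      next
        case 2
        then have "x \<in> T" "c \<notin> T" "x \<notin> Domain r"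
          using assms(2,3) by blast+
        then show False
          using 2(1) by (metis Domain.DomainI converse_rtranclE)
      qed
    qed
  qed
qed

lemma pigeonhole_interval:
  fixes g :: "nat \<Rightarrow> 'a"
  assumes "g ` {1..m} \<subseteq> B" and "finite B" and "card B < m"
  obtains i j where "0 < i" "i < j" "j \<le> m" "g i = g j"
proof -
  have "\<not> inj_on g {1..m}"
    using card_inj_on_le[OF _ assms(1,2)] assms(3) by auto
  then obtain i j where ij: "i \<in> {1..m}" "j \<in> {1..m}" "i \<noteq> j" "g i = g j"
    unfolding inj_on_def by blast
  show ?thesis
  proof (cases "i < j")
    case True
    then show ?thesis
      using ij by (intro that[of i j]) auto
  next
    case False
    then show ?thesis
      using ij by (intro that[of j i]) auto
  qed
qed

fun assertion_individuals :: "('i, 'c, 'r) assertion \<Rightarrow> 'i set" where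
  "assertion_individuals (CAssert a C) = {a}"
| "assertion_individuals (RAssert a b R) = {a, b}"
| "assertion_individuals (NeqAssert a b) = {a, b}"

lemma finite_individuals:
  assumes "finite Ab"
  shows "finite (individuals Ab)"
proof -
  have "finite (assertion_individuals x)" if "x \<in> Ab" for x
    by (cases x) auto
  then have "finite (\<Union>x\<in>Ab. assertion_individuals x)"
    using assms by simp
  moreover have "individuals Ab \<subseteq> (\<Union>x\<in>Ab. assertion_individuals x)"
    unfolding individuals_def by (auto intro: bexI[rotated])
  ultimately show ?thesis
    by (rule finite_subset[rotated])
qed

subsection \<open>Effects of the expansion operations\<close>

lemma add_lab_simps [simp]:
  "nodes (add_lab F y Cs) = nodes F" "edges (add_lab F y Cs) = edges F"
  "elab (add_lab F y Cs) = elab F" "neqr (add_lab F y Cs) = neqr F"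
  "lab (add_lab F y Cs) = (lab F)(y := lab F y \<union> Cs)"
  unfolding add_lab_def by simp_all

lemma nbr_add_lab [simp]: "nbr Rh (add_lab F y Cs) = nbr Rh F"
  unfolding nbr_def[abs_def] succ_r_def by simp

lemma pruned_add_lab [simp]: "pruned (add_lab F y Cs) = pruned F"
  unfolding pruned_def[abs_def] empty_edge_cond_def by simp

lemma removed_root_add_lab:
  "\<not> removed_root F y \<Longrightarrow> removed_root (add_lab F y Cs) x \<longleftrightarrow> removed_root F x"
  unfolding removed_root_def by auto

lemma settled_add_lab:
  assumes "sym (neqr F)" and "\<not> removed_root F y" and "settled Rh F x D"
  shows "settled Rh (add_lab F y Cs) x D"
proof -
  have "satisfies Rh F x D \<Longrightarrow> satisfies Rh (add_lab F y Cs) x D"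
    by (rule satisfies_transfer[where \<psi> = id]) (use assms(1) in auto)
  then show ?thesis
    using assms(3) removed_root_add_lab[OF assms(2)] unfolding settled_def by auto
qed

definition add_children ::
    "('i, 'c, 'r) forest \<Rightarrow> 'i node \<Rightarrow> 'i node set \<Rightarrow> ('c, 'r) concept \<Rightarrow> 'r role
      \<Rightarrow> ('i node \<times> 'i node) set \<Rightarrow> ('i, 'c, 'r) forest" where
  "add_children F x N C S Q = F\<lparr>nodes := nodes F \<union> N, edges := edges F \<union> {x} \<times> N,
     lab := \<lambda>v. if v \<in> N then {C} else lab F v,
     elab := \<lambda>u v. if u = x \<and> v \<in> N then {S} else elab F u v,
     neqr := neqr F \<union> Q\<rparr>"

lemma add_children_simps [simp]:
  "nodes (add_children F x N C S Q) = nodes F \<union> N"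
  "edges (add_children F x N C S Q) = edges F \<union> {x} \<times> N"
  "lab (add_children F x N C S Q) v = (if v \<in> N then {C} else lab F v)"
  "elab (add_children F x N C S Q) u v = (if u = x \<and> v \<in> N then {S} else elab F u v)"
  "neqr (add_children F x N C S Q) = neqr F \<union> Q"
  unfolding add_children_def by simp_all

definition merge_edge ::
    "('r role \<times> 'r role) set \<Rightarrow> ('i, 'c, 'r) forest \<Rightarrow> 'i node \<Rightarrow> 'i node \<Rightarrow> 'i node \<times> 'i node" where
  "merge_edge Rh F x z = (if ancestor Rh F z x then (z, x) else (x, z))"

definition merge_roles ::
    "('r role \<times> 'r role) set \<Rightarrow> ('i, 'c, 'r) forest \<Rightarrow> 'i node \<Rightarrow> 'i node \<Rightarrow> 'i node
      \<Rightarrow> 'r role set" where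
  "merge_roles Rh F x y z = (if ancestor Rh F z x then inv ` elab F x y else elab F x y)"

lemma le_merge_simps:
  "nodes (le_merge Rh F x y z) = nodes F"
  "edges (le_merge Rh F x y z) = insert (merge_edge Rh F x z) (edges F)"
  "lab (le_merge Rh F x y z) = (lab F)(z := lab F z \<union> lab F y)"
  "neqr (le_merge Rh F x y z)
    = neqr F \<union> {(u, z) | u. (u, y) \<in> neqr F} \<union> {(z, u) | u. (u, y) \<in> neqr F}"
  by (auto simp: le_merge_def Let_def add_lab_def add_elab_def merge_edge_def)

lemma le_merge_elab:
  assumes "merge_edge Rh F x z \<noteq> (x, y)"
  shows "elab (le_merge Rh F x y z) u v = (if (u, v) = (x, y) then {}
    else if (u, v) = merge_edge Rh F x z
      then (if (u, v) \<in> edges F then elab F u v else {}) \<union> merge_roles Rh F x y z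
    else elab F u v)"
  using assms
  by (cases "ancestor Rh F z x") (auto simp: le_merge_def Let_def add_lab_def add_elab_def
    merge_edge_def merge_roles_def)

lemma sym_merge_neqr: "sym N \<Longrightarrow> sym (N \<union> {(u, z) | u. (u, y) \<in> N} \<union> {(z, u) | u. (u, y) \<in> N})"
  unfolding sym_def by auto

definition redirect :: "'a \<Rightarrow> 'a \<Rightarrow> 'a \<Rightarrow> 'a" where
  "redirect y z v = (if v = y then z else v)"

lemma redirect_nonroot: "is_root y \<Longrightarrow> \<not> is_root v \<Longrightarrow> redirect y z v = v"
  unfolding redirect_def by auto

lemma redirect_root: "is_root z \<Longrightarrow> is_root v \<Longrightarrow> is_root (redirect y z v)"
  unfolding redirect_def by auto

lemma redirect_not_y: "y \<noteq> z \<Longrightarrow> redirect y z v \<noteq> y"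
  unfolding redirect_def by auto

lemma redirect_eq_nonroot:
  "is_root y \<Longrightarrow> is_root z \<Longrightarrow> \<not> is_root v \<Longrightarrow> redirect y z a = v \<longleftrightarrow> a = v"
  unfolding redirect_def by auto

lemma mem_map_prod_image: "(u, v) \<in> map_prod f g ` E \<longleftrightarrow> (\<exists>a b. (a, b) \<in> E \<and> u = f a \<and> v = g b)"
  by force

lemma merge_neqr_transfer:
  assumes "sym N" and "(y, z) \<notin> N" and "(a, b) \<in> N" and "a \<noteq> b"
  shows "(redirect y z a, redirect y z b) \<in> N \<union> {(u, z) | u. (u, y) \<in> N} \<union> {(z, u) | u. (u, y) \<in> N}
    \<and> redirect y z a \<noteq> redirect y z b"
proof -
  have "(b, a) \<in> N"
    using assms(1,3) unfolding sym_def by blast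
  then show ?thesis
    using assms by (auto simp: redirect_def)
qed

lemma ler_merge_simps:
  "nodes (ler_merge F y z) = nodes F"
  "lab (ler_merge F y z) = ((lab F)(z := lab F z \<union> lab F y))(y := {})"
  "neqr (ler_merge F y z) = neqr F \<union> {(u, z) | u. (u, y) \<in> neqr F} \<union> {(z, u) | u. (u, y) \<in> neqr F}"
  by (auto simp: ler_merge_def Let_def add_lab_def)

lemma ler_merge_edges:
  assumes "y \<noteq> z"
  shows "edges (ler_merge F y z) = map_prod (redirect y z) (redirect y z) ` edges F"
proof (intro equalityI subsetI)
  fix e
  assume "e \<in> edges (ler_merge F y z)"
  then obtain a b where e: "e = (a, b)" "a \<noteq> y" "b \<noteq> y"
    and ab: "(a, b) \<in> edges F \<or> (a = z \<and> (y, b) \<in> edges F) \<or> (b = z \<and> (a, y) \<in> edges F)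
      \<or> (a = z \<and> b = z \<and> (y, y) \<in> edges F)"
    by (cases e) (auto simp: ler_merge_def Let_def add_lab_def)
  from ab show "e \<in> map_prod (redirect y z) (redirect y z) ` edges F"
  proof (elim disjE conjE)
    assume "(a, b) \<in> edges F"
    then show ?thesis
      using e by (intro image_eqI[of _ _ "(a, b)"])
        (auto simp: redirect_def)
  next
    assume "a = z" "(y, b) \<in> edges F"
    then show ?thesis
      using e by (intro image_eqI[of _ _ "(y, b)"])
        (auto simp: redirect_def)
  next
    assume "b = z" "(a, y) \<in> edges F"
    then show ?thesis
      using e by (intro image_eqI[of _ _ "(a, y)"])
        (auto simp: redirect_def)
  next
    assume "a = z" "b = z" "(y, y) \<in> edges F"
    then show ?thesis
      using e by (intro image_eqI[of _ _ "(y, y)"])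
        (auto simp: redirect_def)
  qed
next
  fix e
  assume "e \<in> map_prod (redirect y z) (redirect y z) ` edges F"
  then obtain a b where "(a, b) \<in> edges F" "e = (redirect y z a, redirect y z b)"
    by auto
  then show "e \<in> edges (ler_merge F y z)"
    using assms by (auto simp: ler_merge_def Let_def add_lab_def redirect_def)
qed

lemma ler_merge_elab:
  fixes F :: "('i, 'c, 'r) forest" and y z :: "'i node"
  defines "E2 \<equiv> edges F \<union> {(z, w) | w. (y, w) \<in> edges F}"
    and "el2 \<equiv> \<lambda>u w. if u = z \<and> (y, w) \<in> edges F
      then (if (z, w) \<in> edges F then elab F z w else {}) \<union> elab F y w else elab F u w"
  shows "elab (ler_merge F y z) w u = (if u = z \<and> (w, y) \<in> E2
    then (if (w, z) \<in> E2 then el2 w z else {}) \<union> el2 w y else el2 w u)"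
  unfolding ler_merge_def Let_def add_lab_def E2_def el2_def by simp

lemma ler_merge_elab_mono:
  assumes "y \<noteq> z" and "(a, b) \<in> edges F"
  shows "elab F a b \<subseteq> elab (ler_merge F y z) (redirect y z a) (redirect y z b)"
  using assms by (cases "a = y"; cases "b = y") (auto simp: ler_merge_elab redirect_def)

lemma ler_merge_elab_subset:
  assumes "\<And>u v. elab F u v \<subseteq> A"
  shows "elab (ler_merge F y z) u v \<subseteq> A"
  using assms by (auto simp: ler_merge_elab)

lemma sum_merge_into:
  fixes f :: "'a \<Rightarrow> nat"
  assumes "finite A" "y \<in> A" "z \<in> A" "y \<noteq> z"
  shows "(\<Sum>r\<in>A. (if r = z then f z + f y else if r = y then 0 else f r)) = (\<Sum>r\<in>A. f r)"
proof -
  have A: "A = insert y (insert z (A - {y, z}))"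
    using assms by auto
  have "(\<Sum>r\<in>A - {y, z}. (if r = z then f z + f y else if r = y then 0 else f r))
      = (\<Sum>r\<in>A - {y, z}. f r)"
    by (rule sum.cong) auto
  then show ?thesis
    using assms by (subst (1 2) A) (simp add: sum.insert_remove)
qed

subsection \<open>The invariant and the size bound\<close>

locale shiq_completion =
  fixes Ab :: "('i, 'c, 'r) assertion set" and Rh :: "('r role \<times> 'r role) set"
    and Tr :: "'r set" and A0 :: 'c
  assumes finite_abox: "finite Ab" and finite_hierarchy: "finite Rh"
    and nnf_abox: "\<And>a C. CAssert a C \<in> Ab \<Longrightarrow> is_nnf C"
begin

abbreviation "clos \<equiv> concept_closure A0 Rh Ab"
abbreviation "roles \<equiv> edge_roles A0 Rh Ab"

definition "roots = Root ` individuals Ab"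

text \<open>A root path of non-root nodes that is longer than \<open>depth_bound\<close> repeats a
  (parent label, node label, edge label) triple, so its end is blocked.\<close>
definition "depth_bound = card (Pow clos \<times> Pow clos \<times> Pow roles)"

definition "settled_demand F x = (\<Sum>D\<in>{D\<in>clos. settled Rh F x D}. demand D)"

definition "total_demand = (\<Sum>D\<in>clos. demand D)"

lemma finite_clos: "finite clos"
  using finite_concept_closure[OF finite_abox finite_hierarchy] .

lemma finite_roles: "finite roles"
  using finite_edge_roles[OF finite_abox finite_hierarchy] .

lemma finite_roots: "finite roots"
  unfolding roots_def using finite_individuals[OF finite_abox] by simp

lemma generating_role_ex: "CEx S C \<in> clos \<Longrightarrow> S \<in> roles"
  unfolding edge_roles_def generating_roles_def by (intro UnI1 UnI2 CollectI exI)

lemma generating_role_at_least: "CAtLeast n S C \<in> clos \<Longrightarrow> S \<in> roles"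
  unfolding edge_roles_def generating_roles_def by (intro UnI1 UnI2 CollectI exI)

lemma settled_demand_le_total: "settled_demand F x \<le> total_demand"
  unfolding settled_demand_def total_demand_def by (rule sum_mono2[OF finite_clos]) auto

lemma settled_demand_mono:
  assumes "\<And>D. settled Rh F x D \<Longrightarrow> settled Rh F' x D"
  shows "settled_demand F x \<le> settled_demand F' x"
  unfolding settled_demand_def by (rule sum_mono2) (use finite_clos assms in auto)

lemma settled_demand_increase:
  assumes "\<And>D. settled Rh F x D \<Longrightarrow> settled Rh F' x D"
    and "D0 \<in> clos" and "\<not> settled Rh F x D0" and "settled Rh F' x D0"
  shows "settled_demand F x + demand D0 \<le> settled_demand F' x"
proof -
  have "settled_demand F x + demand D0 = (\<Sum>D\<in>insert D0 {D\<in>clos. settled Rh F x D}. demand D)"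
    unfolding settled_demand_def using assms(3) finite_clos by (subst sum.insert) auto
  also have "\<dots> \<le> settled_demand F' x"
    unfolding settled_demand_def by (rule sum_mono2) (use finite_clos assms in auto)
  finally show ?thesis .
qed

text \<open>Every child of a node was created for one of its demands, which has been settled ever
  since. Children of a root may be moved to another root by the \<open>\<le>\<^sub>r\<close>-rule, so for
  roots only the total is bounded.\<close>
definition invariant :: "('i, 'c, 'r) forest \<Rightarrow> bool" where
  "invariant F \<longleftrightarrow> finite (nodes F) \<and> edges F \<subseteq> nodes F \<times> nodes F
  \<and> (\<forall>v\<in>nodes F. is_root v \<longrightarrow> v \<in> roots) \<and> roots \<subseteq> nodes F
  \<and> (\<forall>v. lab F v \<subseteq> clos) \<and> (\<forall>u v. elab F u v \<subseteq> roles) \<and> sym (neqr F)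
  \<and> (\<forall>u v. (u, v) \<in> edges F \<longrightarrow> is_root v \<longrightarrow> is_root u)
  \<and> (\<forall>u u' v. (u, v) \<in> edges F \<longrightarrow> (u', v) \<in> edges F \<longrightarrow> \<not> is_root v \<longrightarrow> u = u')
  \<and> acyclic (inner_edges F)
  \<and> (\<forall>x. \<not> is_root x \<longrightarrow> card (children F x) \<le> settled_demand F x)
  \<and> (\<Sum>r\<in>roots. card (children F r)) \<le> (\<Sum>r\<in>roots. settled_demand F r)
  \<and> (\<forall>v\<in>nodes F. \<not> is_root v \<longrightarrow> (\<exists>p m. m \<le> Suc depth_bound \<and> root_path F p m \<and> p m = v))"

lemma invariantD:
  assumes "invariant F"
  shows invariant_finite: "finite (nodes F)"
    and invariant_edges: "(u, v) \<in> edges F \<Longrightarrow> u \<in> nodes F \<and> v \<in> nodes F"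
    and invariant_roots: "v \<in> nodes F \<Longrightarrow> is_root v \<Longrightarrow> v \<in> roots"
    and invariant_roots_nodes: "roots \<subseteq> nodes F"
    and invariant_lab: "lab F v \<subseteq> clos"
    and invariant_elab: "elab F u v \<subseteq> roles"
    and invariant_sym: "sym (neqr F)"
    and invariant_root_parent: "(u, v) \<in> edges F \<Longrightarrow> is_root v \<Longrightarrow> is_root u"
    and invariant_parent: "(u, v) \<in> edges F \<Longrightarrow> (u', v) \<in> edges F \<Longrightarrow> \<not> is_root v \<Longrightarrow> u = u'"
    and invariant_acyclic: "acyclic (inner_edges F)"
    and invariant_children: "\<not> is_root x \<Longrightarrow> card (children F x) \<le> settled_demand F x"
    and invariant_root_children:
      "(\<Sum>r\<in>roots. card (children F r)) \<le> (\<Sum>r\<in>roots. settled_demand F r)"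
    and invariant_root_path: "v \<in> nodes F \<Longrightarrow> \<not> is_root v
      \<Longrightarrow> \<exists>p m. m \<le> Suc depth_bound \<and> root_path F p m \<and> p m = v"
  using assms unfolding invariant_def by blast+

lemma invariantI:
  assumes "finite (nodes F)" and "edges F \<subseteq> nodes F \<times> nodes F"
    and "\<And>v. v \<in> nodes F \<Longrightarrow> is_root v \<Longrightarrow> v \<in> roots" and "roots \<subseteq> nodes F"
    and "\<And>v. lab F v \<subseteq> clos" and "\<And>u v. elab F u v \<subseteq> roles" and "sym (neqr F)"
    and "\<And>u v. (u, v) \<in> edges F \<Longrightarrow> is_root v \<Longrightarrow> is_root u"
    and "\<And>u u' v. (u, v) \<in> edges F \<Longrightarrow> (u', v) \<in> edges F \<Longrightarrow> \<not> is_root v \<Longrightarrow> u = u'"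
    and "acyclic (inner_edges F)"
    and "\<And>x. \<not> is_root x \<Longrightarrow> card (children F x) \<le> settled_demand F x"
    and "(\<Sum>r\<in>roots. card (children F r)) \<le> (\<Sum>r\<in>roots. settled_demand F r)"
    and "\<And>v. v \<in> nodes F \<Longrightarrow> \<not> is_root v
      \<Longrightarrow> \<exists>p m. m \<le> Suc depth_bound \<and> root_path F p m \<and> p m = v"
  shows "invariant F"
  using assms unfolding invariant_def by blast

lemma invariant_nbr_node: "invariant F \<Longrightarrow> nbr Rh F x y S \<Longrightarrow> y \<in> nodes F"
  using nbr_edge invariant_edges by blast

lemma finite_children:
  assumes "invariant F"
  shows "finite (children F x)"
proof -
  have "children F x \<subseteq> nodes F"
    using invariant_edges[OF assms] unfolding children_def by blast
  then show ?thesis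
    using invariant_finite[OF assms] by (rule finite_subset)
qed

lemma long_root_path_blocked:
  assumes I: "invariant F" and path: "root_path F p m" and long: "depth_bound < m"
  shows "blocked Rh F (p m)"
proof (cases "\<exists>k<m. elab F (p k) (p (Suc k)) = {}")
  case True
  then obtain k where "k < m" "elab F (p k) (p (Suc k)) = {}"
    by blast
  then show ?thesis
    using root_path_empty_edge_blocked[OF path, of "Suc k"] by simp
next
  case False
  define g where "g j = (lab F (p (j - 1)), lab F (p j), elab F (p (j - 1)) (p j))" for j
  have "g ` {1..m} \<subseteq> Pow clos \<times> Pow clos \<times> Pow roles"
    unfolding g_def
    by (auto intro: subsetD[OF invariant_lab[OF I]] subsetD[OF invariant_elab[OF I]])
  moreover have "finite (Pow clos \<times> Pow clos \<times> Pow roles)"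
    using finite_clos finite_roles by simp
  ultimately obtain i j where "0 < i" "i < j" "j \<le> m" "g i = g j"
    using long unfolding depth_bound_def by (rule pigeonhole_interval)
  then show ?thesis
    using root_path_repeated_blocked[OF path] False unfolding g_def by auto
qed

lemma invariant_init_forest: "invariant (init_forest Ab)"
proof -
  let ?F = "init_forest Ab"
  have nodes: "nodes ?F = roots"
    unfolding init_forest_def roots_def by simp
  have edges: "edges ?F = {(Root a, Root b) | a b. \<exists>R. RAssert a b R \<in> Ab}"
    unfolding init_forest_def by simp
  have "edges ?F \<subseteq> nodes ?F \<times> nodes ?F"
    unfolding edges nodes roots_def individuals_def by blast
  moreover have "lab ?F v \<subseteq> clos" for v
  proof (cases v)
    case (Root a)
    have "{C. CAssert a C \<in> Ab} \<subseteq> abox_concepts Ab"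
      unfolding abox_concepts_def using subconcepts_refl by blast
    then show ?thesis
      using Root unfolding init_forest_def concept_closure_def neg_closure_def by auto
  qed (simp add: init_forest_def)
  moreover have "elab ?F u v \<subseteq> roles" for u v
    by (cases u; cases v) (auto simp: init_forest_def edge_roles_def generating_roles_def)
  moreover have "sym (neqr ?F)"
    unfolding init_forest_def sym_def by auto
  moreover have "inner_edges ?F = {}" and "children ?F x = {}" for x
    unfolding inner_edges_def children_def edges by auto
  moreover have "is_root v" if "v \<in> nodes ?F" for v
    using that unfolding nodes roots_def by auto
  ultimately show ?thesis
    unfolding invariant_def using finite_roots by (auto simp: nodes edges acyclic_def)
qed

definition "level F m = {v. \<exists>p. root_path F p m \<and> p m = v}"

lemma level_subset_nodes: "invariant F \<Longrightarrow> level F m \<subseteq> nodes F"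
  unfolding level_def root_path_def
  by (cases m) (auto dest: invariant_edges)

lemma level_Suc_subset: "level F (Suc m) \<subseteq> (\<Union>u\<in>level F m. children F u)"
proof
  fix v
  assume "v \<in> level F (Suc m)"
  then obtain p where p: "root_path F p (Suc m)" "p (Suc m) = v"
    unfolding level_def by blast
  then have "p m \<in> level F m"
    unfolding level_def using root_path_prefix by blast
  moreover have "v \<in> children F (p m)"
    using p unfolding root_path_def children_def by auto
  ultimately show "v \<in> (\<Union>u\<in>level F m. children F u)"
    by blast
qed

lemma card_level:
  assumes I: "invariant F" and "0 < m"
  shows "card (level F m) \<le> card roots * total_demand ^ m"
  using assms(2)
proof (induction m rule: nat_induct_non_zero)
  case 1
  have "level F 0 \<subseteq> roots"
    unfolding level_def root_path_def using invariant_roots[OF I] by blast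
  moreover have "level F 1 \<subseteq> (\<Union>u\<in>level F 0. children F u)"
    using level_Suc_subset[of F 0] by simp
  ultimately have "level F 1 \<subseteq> (\<Union>r\<in>roots. children F r)"
    by blast
  then have "card (level F 1) \<le> card (\<Union>r\<in>roots. children F r)"
    using finite_roots finite_children[OF I] by (intro card_mono) auto
  also have "\<dots> \<le> (\<Sum>r\<in>roots. card (children F r))"
    by (rule card_UN_le[OF finite_roots])
  also have "\<dots> \<le> (\<Sum>r\<in>roots. settled_demand F r)"
    by (rule invariant_root_children[OF I])
  also have "\<dots> \<le> (\<Sum>r\<in>roots. total_demand)"
    using settled_demand_le_total by (rule sum_mono)
  finally show ?case
    by simp
next
  case (Suc m)
  have fin: "finite (level F m)"
    using level_subset_nodes[OF I] invariant_finite[OF I] by (rule finite_subset)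
  have "card (level F (Suc m)) \<le> card (\<Union>u\<in>level F m. children F u)"
    using level_Suc_subset fin finite_children[OF I] by (intro card_mono) auto
  also have "\<dots> \<le> (\<Sum>u\<in>level F m. card (children F u))"
    by (rule card_UN_le[OF fin])
  also have "\<dots> \<le> (\<Sum>u\<in>level F m. total_demand)"
  proof (rule sum_mono)
    fix u
    assume "u \<in> level F m"
    then have "\<not> is_root u"
      using Suc.hyps unfolding level_def root_path_def by auto
    then show "card (children F u) \<le> total_demand"
      using invariant_children[OF I] settled_demand_le_total le_trans by blast
  qed
  also have "\<dots> \<le> card roots * total_demand ^ Suc m"
    using Suc.IH by simp
  finally show ?case .
qed

definition "node_bound = card roots + (\<Sum>m\<in>{1..Suc depth_bound}. card roots * total_demand ^ m)"

lemma card_nodes_le: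
  assumes I: "invariant F"
  shows "card (nodes F) \<le> node_bound"
proof -
  have "nodes F \<subseteq> roots \<union> (\<Union>m\<in>{1..Suc depth_bound}. level F m)"
  proof
    fix v
    assume v: "v \<in> nodes F"
    show "v \<in> roots \<union> (\<Union>m\<in>{1..Suc depth_bound}. level F m)"
    proof (cases "is_root v")
      case False
      then obtain p m where "m \<le> Suc depth_bound" "root_path F p m" "p m = v"
        using invariant_root_path[OF I v] by blast
      moreover have "m \<noteq> 0"
        using calculation False unfolding root_path_def by auto
      ultimately show ?thesis
        unfolding level_def by auto
    qed (use invariant_roots[OF I v] in blast)
  qed
  moreover have "finite (level F m)" for m
    using level_subset_nodes[OF I] invariant_finite[OF I] by (rule finite_subset)
  ultimately have "card (nodes F) \<le> card (roots \<union> (\<Union>m\<in>{1..Suc depth_bound}. level F m))"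
    using finite_roots by (intro card_mono) auto
  also have "\<dots> \<le> card roots + card (\<Union>m\<in>{1..Suc depth_bound}. level F m)"
    by (rule card_Un_le)
  also have "\<dots> \<le> card roots + (\<Sum>m\<in>{1..Suc depth_bound}. card (level F m))"
    using card_UN_le[of "{1..Suc depth_bound}" "level F"] by simp
  also have "\<dots> \<le> node_bound"
    unfolding node_bound_def using card_level[OF I] by (intro add_left_mono sum_mono) auto
  finally show ?thesis .
qed

subsection \<open>The termination order\<close>

definition "live_roots F = {r \<in> roots. \<not> removed_root F r}"

definition "pruned_nodes F = {v. pruned F v}"

definition "label_size F = (\<Sum>v\<in>nodes F. card (lab F v))"

definition progress :: "(('i, 'c, 'r) forest \<times> ('i, 'c, 'r) forest) set" where
  "progress = measures [\<lambda>F. node_bound - card (nodes F), \<lambda>F. card (live_roots F),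
     \<lambda>F. card (nodes F) - card (pruned_nodes F), \<lambda>F. node_bound * card clos - label_size F]"

lemma pruned_nodes_subset: "invariant F \<Longrightarrow> pruned_nodes F \<subseteq> nodes F"
  unfolding pruned_nodes_def pruned_def empty_edge_cond_def using invariant_edges by blast

lemma label_size_le:
  assumes I: "invariant F"
  shows "label_size F \<le> node_bound * card clos"
proof -
  have "label_size F \<le> (\<Sum>v\<in>nodes F. card clos)"
    unfolding label_size_def using invariant_lab[OF I] finite_clos by (intro sum_mono card_mono)
  also have "\<dots> \<le> node_bound * card clos"
    using card_nodes_le[OF I] by simp
  finally show ?thesis .
qed

lemma progress_nodes:
  assumes "invariant F'" and "card (nodes F) < card (nodes F')"
  shows "(F', F) \<in> progress"
  unfolding progress_def using card_nodes_le[OF assms(1)] assms(2)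
  by (intro measures_less) simp

lemma progress_live_roots:
  assumes "nodes F' = nodes F" and "live_roots F' \<subset> live_roots F"
  shows "(F', F) \<in> progress"
proof -
  have "card (live_roots F') < card (live_roots F)"
    using assms(2) finite_roots unfolding live_roots_def by (simp add: psubset_card_mono)
  then show ?thesis
    unfolding progress_def using assms(1) by (intro measures_lesseq measures_less) simp_all
qed

lemma progress_pruned:
  assumes I: "invariant F'" and "nodes F' = nodes F" and "live_roots F' = live_roots F"
    and "pruned_nodes F \<subset> pruned_nodes F'"
  shows "(F', F) \<in> progress"
proof -
  have "finite (pruned_nodes F')"
    using pruned_nodes_subset[OF I] invariant_finite[OF I] by (rule finite_subset)
  then have "card (pruned_nodes F) < card (pruned_nodes F')"
    using assms(4) by (rule psubset_card_mono)
  moreover have "card (pruned_nodes F') \<le> card (nodes F')"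
    using pruned_nodes_subset[OF I] invariant_finite[OF I] by (rule card_mono[rotated])
  ultimately show ?thesis
    unfolding progress_def using assms(2,3) by (intro measures_lesseq measures_less) simp_all
qed

lemma progress_labels:
  assumes I: "invariant F'" and "nodes F' = nodes F" and "live_roots F' = live_roots F"
    and "pruned_nodes F' = pruned_nodes F" and "label_size F < label_size F'"
  shows "(F', F) \<in> progress"
  unfolding progress_def using assms label_size_le[OF I]
  by (intro measures_lesseq measures_less) simp_all

subsection \<open>Rules that only extend node labels\<close>

lemma invariant_same_shape:
  assumes I: "invariant F"
    and same: "nodes F' = nodes F" "edges F' = edges F" "elab F' = elab F" "neqr F' = neqr F"
    and lab: "\<And>v. lab F' v \<subseteq> clos"
    and settled: "\<And>x D. settled Rh F x D \<Longrightarrow> settled Rh F' x D"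
  shows "invariant F'"
proof -
  have shape: "children F' = children F" "root_path F' = root_path F"
      "inner_edges F' = inner_edges F"
    unfolding children_def[abs_def] root_path_def[abs_def] inner_edges_def same by simp_all
  have demand: "settled_demand F x \<le> settled_demand F' x" for x
    using settled by (rule settled_demand_mono)
  have "(\<Sum>r\<in>roots. card (children F' r)) \<le> (\<Sum>r\<in>roots. settled_demand F r)"
    using invariant_root_children[OF I] shape by simp
  also have "\<dots> \<le> (\<Sum>r\<in>roots. settled_demand F' r)"
    using demand by (rule sum_mono)
  finally have "(\<Sum>r\<in>roots. card (children F' r)) \<le> (\<Sum>r\<in>roots. settled_demand F' r)" .
  moreover have "card (children F' x) \<le> settled_demand F' x" if "\<not> is_root x" for x
    using invariant_children[OF I that] demand[of x] shape by simp
  ultimately show ?thesis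
    using I lab unfolding invariant_def same shape by auto
qed

definition label_extension :: "('i, 'c, 'r) forest \<Rightarrow> ('i, 'c, 'r) forest \<Rightarrow> bool" where
  "label_extension F F' \<longleftrightarrow> (\<exists>y Cs. y \<in> nodes F \<and> Cs \<subseteq> clos \<and> \<not> removed_root F y
     \<and> \<not> Cs \<subseteq> lab F y \<and> F' = add_lab F y Cs)"

lemma label_extension_progress:
  assumes I: "invariant F" and "label_extension F F'"
  shows "invariant F' \<and> (F', F) \<in> progress"
proof -
  obtain y Cs where y: "y \<in> nodes F" "Cs \<subseteq> clos" "\<not> removed_root F y" "\<not> Cs \<subseteq> lab F y"
      and F': "F' = add_lab F y Cs"
    using assms(2) unfolding label_extension_def by blast
  have I': "invariant F'"
    unfolding F' using I y(2)
    by (intro invariant_same_shape[OF I])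
      (auto intro: settled_add_lab[OF invariant_sym[OF I] y(3)] dest: invariant_lab)
  have fin: "finite (lab F' v)" for v
    using invariant_lab[OF I'] finite_clos by (rule finite_subset)
  have "label_size F < label_size F'"
    unfolding label_size_def F' add_lab_simps
  proof (rule sum_strict_mono_ex1[OF invariant_finite[OF I]])
    show "\<forall>v\<in>nodes F. card (lab F v) \<le> card (((lab F)(y := lab F y \<union> Cs)) v)"
    proof
      fix v
      have "finite (((lab F)(y := lab F y \<union> Cs)) v)"
        using fin[of v] unfolding F' by simp
      then show "card (lab F v) \<le> card (((lab F)(y := lab F y \<union> Cs)) v)"
        by (rule card_mono) auto
    qed
    show "\<exists>v\<in>nodes F. card (lab F v) < card (((lab F)(y := lab F y \<union> Cs)) v)"
      using y fin[of y] unfolding F' by (intro bexI[of _ y] psubset_card_mono) auto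
  qed
  moreover have "live_roots F' = live_roots F"
    unfolding live_roots_def F' removed_root_add_lab[OF y(3)] ..
  ultimately show ?thesis
    using I' progress_labels unfolding F' pruned_nodes_def by simp
qed

lemma and_rule_label_extension:
  assumes I: "invariant F" and "and_rule Rh F F'"
  shows "label_extension F F'"
proof -
  obtain x C1 C2 where x: "x \<in> nodes F" "CAnd C1 C2 \<in> lab F x" "\<not> {C1, C2} \<subseteq> lab F x"
      "F' = add_lab F x {C1, C2}"
    using assms(2) unfolding and_rule_def by blast
  have "CAnd C1 C2 \<in> clos"
    using x(2) invariant_lab[OF I] by blast
  then have "{C1, C2} \<subseteq> clos"
    by (auto elim: concept_closure_subconcept)
  moreover have "\<not> removed_root F x"
    using x(2) unfolding removed_root_def by auto
  ultimately show ?thesis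
    unfolding label_extension_def using x by blast
qed

lemma or_rule_label_extension:
  assumes I: "invariant F" and "or_rule Rh F F'"
  shows "label_extension F F'"
proof -
  obtain x C1 C2 C where x: "x \<in> nodes F" "COr C1 C2 \<in> lab F x" "{C1, C2} \<inter> lab F x = {}"
      "C = C1 \<or> C = C2" "F' = add_lab F x {C}"
    using assms(2) unfolding or_rule_def by blast
  have "COr C1 C2 \<in> clos"
    using x(2) invariant_lab[OF I] by blast
  then have "{C} \<subseteq> clos"
    using x(4) by (auto elim: concept_closure_subconcept)
  moreover have "\<not> removed_root F x"
    using x(2) unfolding removed_root_def by auto
  ultimately show ?thesis
    unfolding label_extension_def using x by blast
qed

lemma all_rule_label_extension:
  assumes I: "invariant F" and "all_rule Rh F F'"
  shows "label_extension F F'"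
proof -
  obtain x S C y where x: "CAll S C \<in> lab F x" "nbr Rh F x y S" "C \<notin> lab F y"
      "F' = add_lab F y {C}"
    using assms(2) unfolding all_rule_def by blast
  have "CAll S C \<in> clos"
    using x(1) invariant_lab[OF I] by blast
  then have "{C} \<subseteq> clos"
    by (simp add: concept_closure_all)
  then show ?thesis
    unfolding label_extension_def
    using x invariant_nbr_node[OF I x(2)] not_removed_root_nbr[OF x(2)] by blast
qed

lemma all_plus_rule_label_extension:
  assumes I: "invariant F" and "all_plus_rule Tr Rh F F'"
  shows "label_extension F F'"
proof -
  obtain x S C R y where x: "CAll S C \<in> lab F x" "subrole Rh R S" "nbr Rh F x y R"
      "CAll R C \<notin> lab F y" "F' = add_lab F y {CAll R C}"
    using assms(2) unfolding all_plus_rule_def by blast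
  have "CAll S C \<in> clos"
    using x(1) invariant_lab[OF I] by blast
  then have "{CAll R C} \<subseteq> clos"
    using x(2) by (simp add: concept_closure_all_subrole)
  then show ?thesis
    unfolding label_extension_def
    using x invariant_nbr_node[OF I x(3)] not_removed_root_nbr[OF x(3)] by blast
qed

lemma choose_rule_label_extension:
  assumes I: "invariant F" and "choose_rule A0 Rh F F'"
  shows "label_extension F F'"
proof -
  obtain x n S C y D where x: "CAtMost n S C \<in> lab F x \<or> CAtLeast n S C \<in> lab F x"
      "nbr Rh F x y S" "{C, sim A0 C} \<inter> lab F y = {}" "D = C \<or> D = sim A0 C"
      "F' = add_lab F y {D}"
    using assms(2) unfolding choose_rule_def by blast
  obtain X where X: "X \<in> clos" "C \<in> qualifier X"
    using x(1) invariant_lab[OF I] by (metis insertI1 qualifier.simps(1,2) subsetD)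
  have "C \<in> clos"
    using X by (cases X) (auto elim: concept_closure_subconcept)
  moreover have "sim A0 C \<in> clos"
    using nnf_abox X by (rule concept_closure_neg_qualifier)
  ultimately have "{D} \<subseteq> clos"
    using x(4) by blast
  then show ?thesis
    unfolding label_extension_def
    using x invariant_nbr_node[OF I x(2)] not_removed_root_nbr[OF x(2)] by blast
qed

subsection \<open>Generating rules\<close>

context
  fixes F :: "('i, 'c, 'r) forest" and x N C S Q D
  assumes I: "invariant F" and x: "x \<in> nodes F" "\<not> blocked Rh F x"
    and N: "finite N" "N \<inter> nodes F = {}" "\<And>v. v \<in> N \<Longrightarrow> \<not> is_root v" "N \<noteq> {}"
    and Q: "Q \<subseteq> N \<times> N" "sym Q"
    and C: "C \<in> clos" and S: "S \<in> roles"
    and D: "D \<in> clos" "D \<in> lab F x" "demand D = card N" "\<not> satisfies Rh F x D"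
      "satisfies Rh (add_children F x N C S Q) x D"
begin

lemma add_children_parent_not_new: "x \<notin> N"
  using x N(2) by blast

lemma add_children_old_edges: "(u, v) \<in> edges F \<Longrightarrow> u \<notin> N \<and> v \<notin> N"
  using invariant_edges[OF I] N(2) by blast

lemma add_children_nbr: "nbr Rh F a b R \<Longrightarrow> nbr Rh (add_children F x N C S Q) a b R"
  unfolding nbr_def succ_r_def using add_children_old_edges by auto

lemma add_children_settled:
  assumes "settled Rh F v E"
  shows "settled Rh (add_children F x N C S Q) v E"
proof -
  have "satisfies Rh F v E \<Longrightarrow> satisfies Rh (add_children F x N C S Q) v E"
  proof (rule satisfies_transfer[where \<psi> = id])
    show "nbr Rh F v w R \<Longrightarrow> nbr Rh (add_children F x N C S Q) v (id w) R" for w R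
      using add_children_nbr by simp
    show "nbr Rh F v w R \<Longrightarrow> lab F w \<subseteq> lab (add_children F x N C S Q) (id w)" for w R
      using invariant_nbr_node[OF I] N(2) by auto
  qed (use invariant_sym[OF I] in auto)
  moreover have "pruned F v \<Longrightarrow> pruned (add_children F x N C S Q) v"
    unfolding pruned_def empty_edge_cond_def using add_children_old_edges by fastforce
  moreover have "removed_root (add_children F x N C S Q) v" if "removed_root F v"
  proof -
    have "v \<notin> N" "v \<noteq> x"
      using that N(3) D(2) unfolding removed_root_def by auto
    then show ?thesis
      using that unfolding removed_root_def by auto
  qed
  ultimately show ?thesis
    using assms unfolding settled_def by blast
qed

lemma add_children_settled_demand:
  "settled_demand F v \<le> settled_demand (add_children F x N C S Q) v"
  using add_children_settled by (rule settled_demand_mono)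

lemma add_children_settled_demand_parent:
  "settled_demand F x + card N \<le> settled_demand (add_children F x N C S Q) x"
proof -
  have "\<not> pruned F x"
    using x(2) unfolding blocked_def pruned_def by blast
  moreover have "\<not> removed_root F x"
    using D(2) unfolding removed_root_def by auto
  ultimately show ?thesis
    using settled_demand_increase[OF add_children_settled D(1)] D(3-5) unfolding settled_def by simp
qed

lemma add_children_children:
  "children (add_children F x N C S Q) v = (if v = x then children F x \<union> N else children F v)"
  unfolding children_def using N(3) by auto

lemma card_add_children_children:
  "card (children (add_children F x N C S Q) x) = card (children F x) + card N"
proof -
  have "children F x \<inter> N = {}"
    using add_children_old_edges unfolding children_def by blast
  then show ?thesis
    using add_children_children finite_children[OF I] N(1) by (simp add: card_Un_disjoint)
qed

lemma add_children_root_children: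
  "(\<Sum>r\<in>roots. card (children (add_children F x N C S Q) r))
    \<le> (\<Sum>r\<in>roots. settled_demand (add_children F x N C S Q) r)"
proof (cases "x \<in> roots")
  case True
  have "(\<Sum>r\<in>roots. card (children (add_children F x N C S Q) r))
      = (\<Sum>r\<in>roots. card (children F r)) + card N"
    using True finite_roots card_add_children_children
    by (simp add: sum.remove add_children_children)
  also have "\<dots> \<le> (\<Sum>r\<in>roots. settled_demand F r) + card N"
    using invariant_root_children[OF I] by simp
  also have "\<dots> \<le> (\<Sum>r\<in>roots. settled_demand (add_children F x N C S Q) r)"
  proof -
    have "(\<Sum>r\<in>roots. settled_demand F r) + card N
        = settled_demand F x + card N + (\<Sum>r\<in>roots - {x}. settled_demand F r)"
      using finite_roots True by (simp add: sum.remove)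
    also have "\<dots> \<le> settled_demand (add_children F x N C S Q) x
        + (\<Sum>r\<in>roots - {x}. settled_demand (add_children F x N C S Q) r)"
      using add_children_settled_demand_parent add_children_settled_demand
      by (intro add_mono sum_mono)
    also have "\<dots> = (\<Sum>r\<in>roots. settled_demand (add_children F x N C S Q) r)"
      using finite_roots True by (simp add: sum.remove)
    finally show ?thesis .
  qed
  finally show ?thesis .
next
  case False
  then have "(\<Sum>r\<in>roots. card (children (add_children F x N C S Q) r))
      = (\<Sum>r\<in>roots. card (children F r))"
    using add_children_children by (intro sum.cong) auto
  also have "\<dots> \<le> (\<Sum>r\<in>roots. settled_demand F r)"
    by (rule invariant_root_children[OF I])
  also have "\<dots> \<le> (\<Sum>r\<in>roots. settled_demand (add_children F x N C S Q) r)"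
    using add_children_settled_demand by (rule sum_mono)
  finally show ?thesis .
qed

lemma add_children_acyclic: "acyclic (inner_edges (add_children F x N C S Q))"
proof -
  have "inner_edges (add_children F x N C S Q) \<subseteq> inner_edges F \<union> {x} \<times> N"
    unfolding inner_edges_def by auto
  moreover have "acyclic (inner_edges F \<union> {x} \<times> N)"
    by (rule acyclic_Un_fresh[OF invariant_acyclic[OF I]])
      (use add_children_old_edges add_children_parent_not_new in \<open>auto simp: inner_edges_def\<close>)
  ultimately show ?thesis
    using acyclic_subset by blast
qed

text \<open>The parent \<open>x\<close> is not blocked, so its root path is short enough to be extended.\<close>
lemma add_children_root_path:
  assumes "v \<in> N"
  shows "\<exists>p m. m \<le> Suc depth_bound \<and> root_path (add_children F x N C S Q) p m \<and> p m = v"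
proof (cases "is_root x")
  case True
  have "root_path (add_children F x N C S Q) (\<lambda>j. if j = 0 then x else v) 1"
    using True x assms N(3) unfolding root_path_def by auto
  then show ?thesis
    by (intro exI[of _ "\<lambda>j. if j = 0 then x else v"] exI[of _ 1]) auto
next
  case False
  then obtain p m where p: "m \<le> Suc depth_bound" "root_path F p m" "p m = x"
    using invariant_root_path[OF I x(1)] by blast
  have "m \<le> depth_bound"
    using long_root_path_blocked[OF I p(2)] x(2) p(3) by fastforce
  moreover have "root_path (add_children F x N C S Q) (p(Suc m := v)) (Suc m)"
    using p(2,3) assms N(3) unfolding root_path_def by (auto simp: less_Suc_eq)
  ultimately show ?thesis
    by (intro exI[of _ "p(Suc m := v)"] exI[of _ "Suc m"]) auto
qed

lemma add_children_invariant: "invariant (add_children F x N C S Q)"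
proof (rule invariantI)
  fix v :: "'i node"
  assume "\<not> is_root v"
  then show "card (children (add_children F x N C S Q) v)
      \<le> settled_demand (add_children F x N C S Q) v"
    using invariant_children[OF I] add_children_settled_demand[of v]
      add_children_settled_demand_parent card_add_children_children add_children_children[of v]
    by (cases "v = x") fastforce+
next
  fix v :: "'i node"
  assume "v \<in> nodes (add_children F x N C S Q)" and "\<not> is_root v"
  then show "\<exists>p m. m \<le> Suc depth_bound \<and> root_path (add_children F x N C S Q) p m \<and> p m = v"
    using invariant_root_path[OF I] root_path_mono[of F _ _ "add_children F x N C S Q"]
      add_children_root_path by fastforce
next
  fix u u' v :: "'i node"
  assume "(u, v) \<in> edges (add_children F x N C S Q)" "(u', v) \<in> edges (add_children F x N C S Q)"
    and "\<not> is_root v"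
  then show "u = u'"
    using invariant_parent[OF I] add_children_old_edges by auto
next
  show "sym (neqr (add_children F x N C S Q))"
    using invariant_sym[OF I] Q(2) unfolding sym_def by auto
next
  show "roots \<subseteq> nodes (add_children F x N C S Q)"
    using invariant_roots_nodes[OF I] by auto
next
  show "lab (add_children F x N C S Q) v \<subseteq> clos" for v
    using invariant_lab[OF I] C by auto
next
  show "elab (add_children F x N C S Q) u v \<subseteq> roles" for u v
    using invariant_elab[OF I, of u v] S by auto
qed (use x N(1,3) invariant_finite[OF I] invariant_edges[OF I] invariant_roots[OF I]
     invariant_root_parent[OF I] add_children_acyclic add_children_root_children in auto)

lemma add_children_progress:
  "invariant (add_children F x N C S Q) \<and> (add_children F x N C S Q, F) \<in> progress"
proof -
  have "card (nodes F) < card (nodes (add_children F x N C S Q))"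
    using N invariant_finite[OF I] by (simp add: card_Un_disjoint Int_commute card_gt_0_iff)
  then show ?thesis
    using add_children_invariant progress_nodes by blast
qed

end

lemma ex_rule_progress:
  assumes I: "invariant F" and r: "ex_rule Rh F F'"
  shows "invariant F' \<and> (F', F) \<in> progress"
proof -
  obtain x S C k where x: "x \<in> nodes F" "CEx S C \<in> lab F x" "\<not> blocked Rh F x"
      "\<not> (\<exists>y. nbr Rh F x y S \<and> C \<in> lab F y)" "New k \<notin> nodes F"
    and F': "F' = F\<lparr>nodes := insert (New k) (nodes F), edges := insert (x, New k) (edges F),
      lab := (lab F)(New k := {C}), elab := (elab F)(x := (elab F x)(New k := {S}))\<rparr>"
    using r unfolding ex_rule_def by blast
  have F'_eq: "F' = add_children F x {New k} C S {}"
    unfolding F' by (rule forest.equality) (auto simp: add_children_def fun_eq_iff)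
  have D: "CEx S C \<in> clos"
    using x(2) invariant_lab[OF I] by blast
  have C: "C \<in> clos"
    using D by (rule concept_closure_subconcept) auto
  have S: "S \<in> roles"
    using D by (rule generating_role_ex)
  have "nbr Rh (add_children F x {New k} C S {}) x (New k) S"
    unfolding nbr_def succ_r_def by (simp add: subrole_refl)
  then have "satisfies Rh (add_children F x {New k} C S {}) x (CEx S C)"
    by auto
  then show ?thesis
    unfolding F'_eq using x(4,5)
    by (intro add_children_progress[OF I x(1,3) _ _ _ _ _ _ C S D x(2)]) (auto simp: sym_def)
qed

lemma ge_rule_progress:
  assumes I: "invariant F" and r: "ge_rule Rh F F'"
  shows "invariant F' \<and> (F', F) \<in> progress"
proof -
  obtain x n S C ks where x: "x \<in> nodes F" "CAtLeast n S C \<in> lab F x" "\<not> blocked Rh F x"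
      "\<not> (\<exists>ys. (\<forall>i<n. nbr Rh F x (ys i) S \<and> C \<in> lab F (ys i))
              \<and> (\<forall>i j. i < j \<and> j < n \<longrightarrow> (ys i, ys j) \<in> neqr F))"
      "inj_on ks {..<n}" "\<forall>i<n. New (ks i) \<notin> nodes F"
    and F': "F' = F\<lparr>nodes := nodes F \<union> {New (ks i) | i. i < n},
               edges := edges F \<union> {(x, New (ks i)) | i. i < n},
               lab := (\<lambda>v. if (\<exists>i<n. v = New (ks i)) then {C} else lab F v),
               elab := (\<lambda>u v. if u = x \<and> (\<exists>i<n. v = New (ks i)) then {S} else elab F u v),
               neqr := neqr F \<union> {(New (ks i), New (ks j)) | i j. i < n \<and> j < n \<and> i \<noteq> j}\<rparr>"
    using r unfolding ge_rule_def by blast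
  define N :: "'i node set" where "N = {New (ks i) | i. i < n}"
  define Q :: "('i node \<times> 'i node) set"
    where "Q = {(New (ks i), New (ks j)) | i j. i < n \<and> j < n \<and> i \<noteq> j}"
  have F'_eq: "F' = add_children F x N C S Q"
    unfolding F' N_def Q_def by (rule forest.equality) (auto simp: add_children_def fun_eq_iff)
  have inj: "inj_on (\<lambda>i. New (ks i)) {..<n}"
    using x(5) unfolding inj_on_def by auto
  have N_image: "N = (\<lambda>i. New (ks i)) ` {..<n}"
    unfolding N_def by auto
  have D: "CAtLeast n S C \<in> clos"
    using x(2) invariant_lab[OF I] by blast
  have C: "C \<in> clos"
    using D by (rule concept_closure_subconcept) auto
  have S: "S \<in> roles"
    using D by (rule generating_role_at_least)
  have new: "New (ks i) \<in> N" if "i < n" for i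
    unfolding N_def using that by blast
  have "satisfies Rh (add_children F x N C S Q) x (CAtLeast n S C)"
  proof (rule satisfies_at_least)
    show "nbr Rh (add_children F x N C S Q) x (New (ks i)) S" if "i < n" for i
      unfolding nbr_def succ_r_def using new[OF that] by (simp add: subrole_refl)
    show "(New (ks i), New (ks j)) \<in> neqr (add_children F x N C S Q)" if "i < j" "j < n" for i j
    proof -
      have "(New (ks i), New (ks j)) \<in> Q"
        unfolding Q_def using that by (intro CollectI exI[of _ i] exI[of _ j]) simp
      then show ?thesis
        by simp
    qed
  qed (use inj new in simp_all)
  moreover have "\<not> satisfies Rh F x (CAtLeast n S C)"
    using x(4) by auto
  moreover have "finite N" "N \<inter> nodes F = {}" "\<And>v. v \<in> N \<Longrightarrow> \<not> is_root v"
    unfolding N_def using x(6) by auto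
  moreover have "N \<noteq> {}"
    using x(4) new by fastforce
  moreover have "Q \<subseteq> N \<times> N" "sym Q"
    unfolding Q_def N_def sym_def by auto
  moreover have "demand (CAtLeast n S C) = card N"
    unfolding N_image card_image[OF inj] by simp
  ultimately show ?thesis
    unfolding F'_eq using add_children_progress[OF I x(1,3) _ _ _ _ _ _ C S D x(2)] by blast
qed

subsection \<open>The \<open>\<le>\<close>-rule\<close>

context
  fixes F :: "('i, 'c, 'r) forest" and x y z :: "'i node" and S :: "'r role"
  assumes I: "invariant F" and x: "x \<in> nodes F" "\<not> indirectly_blocked Rh F x"
    and y: "nbr Rh F x y S" "\<not> is_root y" "\<not> ancestor Rh F y z" "(y, z) \<notin> neqr F" "y \<noteq> z"
    and z: "nbr Rh F x z S"
begin

lemma le_no_empty_edge: "\<not> empty_edge_cond F x"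
  using x(2) unfolding indirectly_blocked_def by blast

lemma le_not_parent: "(y, x) \<notin> edges F"
proof
  assume yx: "(y, x) \<in> edges F"
  then have x_nonroot: "\<not> is_root x"
    using invariant_root_parent[OF I] y(2) by blast
  have "is_succ Rh F y x"
    using yx le_no_empty_edge is_succ_iff unfolding empty_edge_cond_def by blast
  from z show False
    unfolding nbr_def
  proof
    assume "succ_r Rh F x z S"
    then have "is_succ Rh F x z"
      unfolding is_succ_def by blast
    then have "ancestor Rh F y z"
      using \<open>is_succ Rh F y x\<close> unfolding ancestor_def by (intro trancl_into_trancl2[of y x]) auto
    then show False
      using y(3) by blast
  next
    assume "succ_r Rh F z x (inv S)"
    then have "(z, x) \<in> edges F"
      unfolding succ_r_def by blast
    then show False
      using invariant_parent[OF I yx _ x_nonroot] y(5) by blast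
  qed
qed

lemma le_child: "(x, y) \<in> edges F" "elab F x y \<noteq> {}"
proof -
  have "succ_r Rh F x y S"
    using y(1) le_not_parent unfolding nbr_def succ_r_def by blast
  then show "(x, y) \<in> edges F" "elab F x y \<noteq> {}"
    unfolding succ_r_def by auto
qed

lemma le_target_succ: "\<not> ancestor Rh F z x \<Longrightarrow> succ_r Rh F x z S"
  using z unfolding nbr_def ancestor_def is_succ_def by blast

text \<open>If \<open>z\<close> is an ancestor of \<open>x\<close>, acyclicity of the inner edges excludes an edge
  \<open>\<langle>x, z\<rangle>\<close> unless both nodes are roots.\<close>
lemma le_merge_edge_cases: "merge_edge Rh F x z \<in> edges F \<or> (is_root x \<and> is_root z)"
proof (cases "ancestor Rh F z x")
  case anc: True
  show ?thesis
  proof (rule ccontr)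
    assume c: "\<not> ?thesis"
    then have "(x, z) \<in> edges F"
      using z anc unfolding nbr_def succ_r_def merge_edge_def by auto
    show False
    proof (cases "is_root x")
      case True
      then have "is_root z"
        using ancestor_root[OF _ anc] invariant_root_parent[OF I] by blast
      then show False
        using True c by blast
    next
      case False
      then have "\<not> is_root z"
        using invariant_root_parent[OF I \<open>(x, z) \<in> edges F\<close>] by blast
      then have "(z, x) \<in> (inner_edges F)\<^sup>+"
        using ancestor_inner_edges[OF _ anc] invariant_root_parent[OF I] by blast
      moreover have "(x, z) \<in> inner_edges F"
        using \<open>(x, z) \<in> edges F\<close> False unfolding inner_edges_def by blast
      ultimately show False
        using invariant_acyclic[OF I] unfolding acyclic_def by (meson trancl_into_trancl)
    qed
  qed
next
  case False
  then show ?thesis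
    using le_target_succ unfolding merge_edge_def succ_r_def by auto
qed

lemma le_merge_edges_cases:
  assumes "(u, v) \<in> edges (le_merge Rh F x y z)"
  shows "(u, v) \<in> edges F \<or> (is_root u \<and> is_root v)"
proof -
  obtain a b where e: "merge_edge Rh F x z = (a, b)"
    by fastforce
  have "(a, b) \<in> edges F \<or> (is_root a \<and> is_root b)"
    using le_merge_edge_cases e unfolding merge_edge_def by (auto split: if_splits)
  then show ?thesis
    using assms e by (auto simp: le_merge_simps)
qed

lemma le_merge_edge_ne: "merge_edge Rh F x z \<noteq> (x, y)"
  using le_child le_not_parent y(5) unfolding merge_edge_def by auto

lemma le_merge_elab_mono:
  "(u, v) \<in> edges F \<Longrightarrow> (u, v) \<noteq> (x, y) \<Longrightarrow> elab F u v \<subseteq> elab (le_merge Rh F x y z) u v"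
  by (auto simp: le_merge_elab[OF le_merge_edge_ne])

lemma le_merge_nbr:
  "nbr Rh F a b R \<Longrightarrow> (a, b) \<noteq> (x, y) \<Longrightarrow> (a, b) \<noteq> (y, x) \<Longrightarrow> nbr Rh (le_merge Rh F x y z) a b R"
  unfolding nbr_def succ_r_def using le_merge_elab_mono le_merge_simps(2) by blast

lemma le_merge_nbr_moved:
  assumes "nbr Rh F x y R"
  shows "nbr Rh (le_merge Rh F x y z) x z R"
proof -
  obtain Q where Q: "Q \<in> elab F x y" "subrole Rh Q R"
    using assms le_not_parent unfolding nbr_def succ_r_def by blast
  show ?thesis
  proof (cases "ancestor Rh F z x")
    case True
    then have "inv Q \<in> elab (le_merge Rh F x y z) z x" and "(z, x) \<in> edges (le_merge Rh F x y z)"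
      using Q(1) le_merge_edge_ne
      by (auto simp: le_merge_elab le_merge_simps merge_edge_def merge_roles_def)
    then show ?thesis
      using subrole_inv[OF Q(2)] unfolding nbr_def succ_r_def by auto
  next
    case False
    then have "Q \<in> elab (le_merge Rh F x y z) x z" and "(x, z) \<in> edges (le_merge Rh F x y z)"
      using Q(1) le_merge_edge_ne
      by (auto simp: le_merge_elab le_merge_simps merge_edge_def merge_roles_def)
    then show ?thesis
      using Q(2) unfolding nbr_def succ_r_def by auto
  qed
qed

lemma le_merge_pruned_node: "pruned (le_merge Rh F x y z) y"
  unfolding pruned_def empty_edge_cond_def using y(2) le_child(1) le_merge_edge_ne
  by (auto simp: le_merge_simps le_merge_elab)

lemma le_merge_pruned:
  assumes "pruned F v"
  shows "pruned (le_merge Rh F x y z) v"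
proof -
  obtain u where u: "(u, v) \<in> edges F" "elab F u v = {}" "\<not> is_root v"
    using assms unfolding pruned_def empty_edge_cond_def by blast
  have "v \<noteq> x"
    using assms le_no_empty_edge unfolding pruned_def by blast
  moreover have "(u, v) \<noteq> merge_edge Rh F x z"
    using \<open>v \<noteq> x\<close> le_target_succ u(2) unfolding merge_edge_def succ_r_def by auto
  ultimately have "elab (le_merge Rh F x y z) u v = {}"
    using u(2) le_merge_edge_ne by (auto simp: le_merge_elab)
  then show ?thesis
    using u unfolding pruned_def empty_edge_cond_def by (auto simp: le_merge_simps)
qed

lemma le_merge_removed_root: "removed_root (le_merge Rh F x y z) v \<longleftrightarrow> removed_root F v"
proof -
  have "\<not> removed_root F x" "\<not> removed_root F z"
    using le_child(1) z not_removed_root_nbr unfolding removed_root_def by blast+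
  then show ?thesis
    unfolding removed_root_def by (auto simp: le_merge_simps merge_edge_def)
qed

lemma le_merge_settled:
  assumes "settled Rh F v D"
  shows "settled Rh (le_merge Rh F x y z) v D"
proof -
  let ?F' = "le_merge Rh F x y z"
  have sym: "sym (neqr F)"
    by (rule invariant_sym[OF I])
  have lab: "lab F w \<subseteq> lab ?F' (redirect y z w)" for w
    by (auto simp: le_merge_simps redirect_def)
  have neq: "(a, b) \<in> neqr F \<Longrightarrow> a \<noteq> b
      \<Longrightarrow> (redirect y z a, redirect y z b) \<in> neqr ?F' \<and> redirect y z a \<noteq> redirect y z b" for a b
    using merge_neqr_transfer[OF sym y(4)] by (simp add: le_merge_simps)
  consider "v = y" | "v = x" | "v \<noteq> x" "v \<noteq> y"
    by blast
  then show ?thesis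
  proof cases
    case 1
    then show ?thesis
      using le_merge_pruned_node unfolding settled_def by blast
  next
    case 2
    have "\<not> pruned F x" "\<not> removed_root F x"
      using le_no_empty_edge le_child(1) unfolding pruned_def removed_root_def by blast+
    then have "satisfies Rh F x D"
      using assms 2 unfolding settled_def by blast
    then have "satisfies Rh ?F' x D"
    proof (rule satisfies_transfer[where \<psi> = "redirect y z", rotated -1])
      show "nbr Rh F x w R \<Longrightarrow> nbr Rh ?F' x (redirect y z w) R" for w R
        using le_merge_nbr le_merge_nbr_moved le_child le_not_parent
        by (cases "w = y") (auto simp: redirect_def)
    qed (use lab neq sym in auto)
    then show ?thesis
      using 2 unfolding settled_def by blast
  next
    case 3
    have "satisfies Rh F v D \<Longrightarrow> satisfies Rh ?F' v D"
    proof (rule satisfies_transfer[where \<psi> = id])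
      show "nbr Rh F v w R \<Longrightarrow> nbr Rh ?F' v (id w) R" for w R
        using le_merge_nbr 3 by auto
      show "nbr Rh F v w R \<Longrightarrow> lab F w \<subseteq> lab ?F' (id w)" for w R
        by (auto simp: le_merge_simps)
    qed (use sym in \<open>auto simp: le_merge_simps\<close>)
    then show ?thesis
      using assms le_merge_pruned le_merge_removed_root unfolding settled_def by blast
  qed
qed

lemma le_merge_children: "children (le_merge Rh F x y z) = children F"
proof -
  have "(a, v) \<in> edges (le_merge Rh F x y z) \<and> \<not> is_root v \<longleftrightarrow> (a, v) \<in> edges F \<and> \<not> is_root v"
    for a v
    using le_merge_edges_cases[of a v] by (auto simp: le_merge_simps)
  then show ?thesis
    unfolding children_def by simp
qed

lemma le_merge_inner_edges: "inner_edges (le_merge Rh F x y z) = inner_edges F"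
proof -
  have "(a, v) \<in> edges (le_merge Rh F x y z) \<and> \<not> is_root a \<longleftrightarrow> (a, v) \<in> edges F \<and> \<not> is_root a"
    for a v
    using le_merge_edges_cases[of a v] by (auto simp: le_merge_simps)
  then show ?thesis
    unfolding inner_edges_def by simp
qed

lemma le_merge_invariant: "invariant (le_merge Rh F x y z)"
proof (rule invariantI)
  have demand: "settled_demand F v \<le> settled_demand (le_merge Rh F x y z) v" for v
    using le_merge_settled by (rule settled_demand_mono)
  show "card (children (le_merge Rh F x y z) v) \<le> settled_demand (le_merge Rh F x y z) v"
    if "\<not> is_root v" for v
    using invariant_children[OF I that] demand[of v] le_merge_children by simp
  have "(\<Sum>r\<in>roots. card (children F r)) \<le> (\<Sum>r\<in>roots. settled_demand F r)"
    by (rule invariant_root_children[OF I])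
  also have "\<dots> \<le> (\<Sum>r\<in>roots. settled_demand (le_merge Rh F x y z) r)"
    using demand by (rule sum_mono)
  finally show "(\<Sum>r\<in>roots. card (children (le_merge Rh F x y z) r))
      \<le> (\<Sum>r\<in>roots. settled_demand (le_merge Rh F x y z) r)"
    unfolding le_merge_children .
  have "inv ` elab F x y \<subseteq> roles"
    using invariant_elab[OF I, of x y] edge_roles_inv[of _ A0 Rh Ab] by blast
  then show "elab (le_merge Rh F x y z) u v \<subseteq> roles" for u v
    using invariant_elab[OF I] le_merge_edge_ne by (auto simp: le_merge_elab merge_roles_def)
  show "\<exists>p m. m \<le> Suc depth_bound \<and> root_path (le_merge Rh F x y z) p m \<and> p m = v"
    if "v \<in> nodes (le_merge Rh F x y z)" "\<not> is_root v" for v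
    using invariant_root_path[OF I] that root_path_mono[of F _ _ "le_merge Rh F x y z"]
    by (fastforce simp: le_merge_simps)
  show "u = u'" if "(u, v) \<in> edges (le_merge Rh F x y z)" "(u', v) \<in> edges (le_merge Rh F x y z)"
    "\<not> is_root v" for u u' v
    using that invariant_parent[OF I] le_merge_edges_cases by blast
  show "is_root u" if "(u, v) \<in> edges (le_merge Rh F x y z)" "is_root v" for u v
    using that invariant_root_parent[OF I] le_merge_edges_cases by blast
  show "edges (le_merge Rh F x y z) \<subseteq> nodes (le_merge Rh F x y z) \<times> nodes (le_merge Rh F x y z)"
    using invariant_edges[OF I] x(1) invariant_nbr_node[OF I z]
    by (auto simp: le_merge_simps merge_edge_def)
  show "sym (neqr (le_merge Rh F x y z))"
    unfolding le_merge_simps by (rule sym_merge_neqr[OF invariant_sym[OF I]])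
qed (use I le_merge_inner_edges invariant_lab[OF I] invariant_roots[OF I]
    invariant_roots_nodes[OF I] in
  \<open>auto simp: le_merge_simps invariant_finite invariant_acyclic\<close>)

lemma le_merge_progress: "invariant (le_merge Rh F x y z) \<and> (le_merge Rh F x y z, F) \<in> progress"
proof -
  have "\<not> pruned F y"
    using le_child invariant_parent[OF I _ le_child(1) y(2)]
    unfolding pruned_def empty_edge_cond_def by blast
  then have "pruned_nodes F \<subset> pruned_nodes (le_merge Rh F x y z)"
    using le_merge_pruned le_merge_pruned_node unfolding pruned_nodes_def by blast
  moreover have "live_roots (le_merge Rh F x y z) = live_roots F"
    unfolding live_roots_def le_merge_removed_root ..
  ultimately show ?thesis
    using le_merge_invariant progress_pruned by (simp add: le_merge_simps)
qed

end

lemma le_rule_progress: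
  assumes "invariant F" and "le_rule Rh F F'"
  shows "invariant F' \<and> (F', F) \<in> progress"
  using assms(2) le_merge_progress[OF assms(1)] unfolding le_rule_def by blast

subsection \<open>The \<open>\<le>\<^sub>r\<close>-rule\<close>

context
  fixes F :: "('i, 'c, 'r) forest" and x y z :: "'i node" and S :: "'r role"
  assumes I: "invariant F" and y: "nbr Rh F x y S" "is_root y" and z: "nbr Rh F x z S" "is_root z"
    and yz: "y \<noteq> z" "(y, z) \<notin> neqr F"
begin

lemma ler_merge_edges_iff:
  "(u, v) \<in> edges (ler_merge F y z)
    \<longleftrightarrow> (\<exists>a b. (a, b) \<in> edges F \<and> u = redirect y z a \<and> v = redirect y z b)"
  unfolding ler_merge_edges[OF yz(1)] mem_map_prod_image ..

lemma ler_merge_elab_empty: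
  assumes uv: "(u, v) \<in> edges F" "\<not> is_root v" "elab F u v = {}"
  shows "elab (ler_merge F y z) (redirect y z u) v = {}"
proof -
  have "v \<noteq> z"
    using uv(2) z(2) by auto
  show ?thesis
  proof (cases "u = y")
    case True
    then have "(z, v) \<notin> edges F"
      using invariant_parent[OF I uv(1) _ uv(2)] yz(1) by blast
    then show ?thesis
      using True uv \<open>v \<noteq> z\<close> by (simp add: ler_merge_elab redirect_def)
  next
    case False
    then have "(y, v) \<notin> edges F"
      using invariant_parent[OF I uv(1) _ uv(2)] by blast
    then show ?thesis
      using False uv \<open>v \<noteq> z\<close> by (simp add: ler_merge_elab redirect_def)
  qed
qed

lemma ler_merge_succ:
  assumes "succ_r Rh F a b R"
  shows "succ_r Rh (ler_merge F y z) (redirect y z a) (redirect y z b) R"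
proof -
  have "(a, b) \<in> edges F"
    using assms unfolding succ_r_def by blast
  then have "(redirect y z a, redirect y z b) \<in> edges (ler_merge F y z)"
    unfolding ler_merge_edges_iff by blast
  then show ?thesis
    using assms ler_merge_elab_mono[OF yz(1) \<open>(a, b) \<in> edges F\<close>] unfolding succ_r_def by blast
qed

lemma ler_merge_nbr: "nbr Rh F a b R \<Longrightarrow> nbr Rh (ler_merge F y z) (redirect y z a) (redirect y z b) R"
  unfolding nbr_def using ler_merge_succ by blast

lemma ler_merge_removed_node: "removed_root (ler_merge F y z) y"
proof -
  have "(y, w) \<notin> edges (ler_merge F y z)" "(w, y) \<notin> edges (ler_merge F y z)" for w
    using redirect_not_y[OF yz(1)] unfolding ler_merge_edges_iff by metis+
  then show ?thesis
    using y(2) unfolding removed_root_def by (simp add: ler_merge_simps)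
qed

lemma ler_merge_removed_root:
  assumes "removed_root F v"
  shows "removed_root (ler_merge F y z) v"
proof -
  have "v \<noteq> y" "v \<noteq> z"
    using assms y(1) z(1) not_removed_root_nbr by blast+
  then have "v = redirect y z a \<longleftrightarrow> a = v" for a
    unfolding redirect_def by auto
  then show ?thesis
    using assms \<open>v \<noteq> y\<close> \<open>v \<noteq> z\<close> unfolding removed_root_def ler_merge_edges_iff
    by (auto simp: ler_merge_simps)
qed

lemma ler_merge_pruned:
  assumes "pruned F v"
  shows "pruned (ler_merge F y z) v"
proof -
  obtain u where u: "(u, v) \<in> edges F" "\<not> is_root v" "elab F u v = {}"
    using assms unfolding pruned_def empty_edge_cond_def by blast
  have "(redirect y z u, v) \<in> edges (ler_merge F y z)"
    using u(1,2) redirect_nonroot[OF y(2)] unfolding ler_merge_edges_iff by metis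
  then show ?thesis
    using ler_merge_elab_empty[OF u] u(2) unfolding pruned_def empty_edge_cond_def by blast
qed

lemma ler_merge_settled:
  assumes "settled Rh F v D"
  shows "settled Rh (ler_merge F y z) v D"
proof (cases "v = y")
  case True
  then show ?thesis
    using ler_merge_removed_node unfolding settled_def by blast
next
  case False
  have sym: "sym (neqr F)"
    by (rule invariant_sym[OF I])
  have "satisfies Rh F v D \<Longrightarrow> satisfies Rh (ler_merge F y z) (redirect y z v) D"
  proof (rule satisfies_transfer[where \<psi> = "redirect y z"])
    show "nbr Rh F v w R \<Longrightarrow> lab F w \<subseteq> lab (ler_merge F y z) (redirect y z w)" for w R
      using yz(1) by (auto simp: ler_merge_simps redirect_def)
    show "(a, b) \<in> neqr F \<Longrightarrow> a \<noteq> b \<Longrightarrow> (redirect y z a, redirect y z b) \<in> neqr (ler_merge F y z)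
        \<and> redirect y z a \<noteq> redirect y z b" for a b
      using merge_neqr_transfer[OF sym yz(2)] by (simp add: ler_merge_simps)
  qed (use ler_merge_nbr sym in auto)
  moreover have "redirect y z v = v"
    using False unfolding redirect_def by simp
  ultimately show ?thesis
    using assms ler_merge_pruned ler_merge_removed_root unfolding settled_def by auto
qed

lemma ler_merge_children_nonroot:
  assumes "\<not> is_root v"
  shows "children (ler_merge F y z) v = children F v"
proof -
  have "(v, w) \<in> edges (ler_merge F y z) \<longleftrightarrow> (v, w) \<in> edges F" if "\<not> is_root w" for w
  proof
    assume "(v, w) \<in> edges (ler_merge F y z)"
    then obtain a b where ab: "(a, b) \<in> edges F" "v = redirect y z a" "w = redirect y z b"
      unfolding ler_merge_edges_iff by blast
    have "a = v" "b = w"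
      using redirect_eq_nonroot[OF y(2) z(2) assms, of a]
        redirect_eq_nonroot[OF y(2) z(2) that, of b] ab(2,3)
      by simp_all
    then show "(v, w) \<in> edges F"
      using ab(1) by simp
  next
    assume "(v, w) \<in> edges F"
    then show "(v, w) \<in> edges (ler_merge F y z)"
      unfolding ler_merge_edges_iff
      using redirect_nonroot[OF y(2) assms] redirect_nonroot[OF y(2) that]
      by (intro exI[of _ v] exI[of _ w]) simp
  qed
  then show ?thesis
    unfolding children_def by blast
qed

lemma ler_merge_children_root:
  "children (ler_merge F y z) r
    \<subseteq> (if r = z then children F z \<union> children F y else if r = y then {} else children F r)"
proof
  fix w
  assume "w \<in> children (ler_merge F y z) r"
  then have "(r, w) \<in> edges (ler_merge F y z)" and nonroot: "\<not> is_root w"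
    unfolding children_def by blast+
  then obtain a b where ab: "(a, b) \<in> edges F" "r = redirect y z a" "w = redirect y z b"
    unfolding ler_merge_edges_iff by blast
  have "b = w"
    using redirect_eq_nonroot[OF y(2) z(2) nonroot, of b] ab(3) by simp
  then have w: "w \<in> children F a"
    using ab(1) nonroot unfolding children_def by blast
  show "w \<in> (if r = z then children F z \<union> children F y else if r = y then {} else children F r)"
  proof (cases "a = y")
    case True
    then show ?thesis
      using w ab(2) unfolding redirect_def by simp
  next
    case False
    then show ?thesis
      using w ab(2) yz(1) unfolding redirect_def by auto
  qed
qed

lemma ler_merge_root_children:
  "(\<Sum>r\<in>roots. card (children (ler_merge F y z) r)) \<le> (\<Sum>r\<in>roots. card (children F r))"
proof -
  let ?c = "\<lambda>r. card (children F r)"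
  have yz_roots: "y \<in> roots" "z \<in> roots"
    using invariant_roots[OF I] invariant_nbr_node[OF I] y z by blast+
  have "card (children (ler_merge F y z) r)
      \<le> (if r = z then ?c z + ?c y else if r = y then 0 else ?c r)" for r
  proof -
    have "card (children (ler_merge F y z) r)
        \<le> card (if r = z then children F z \<union> children F y else if r = y then {} else children F r)"
      using ler_merge_children_root[of r] finite_children[OF I] by (intro card_mono) auto
    then show ?thesis
      using card_Un_le[of "children F z" "children F y"] by (auto split: if_splits)
  qed
  then have "(\<Sum>r\<in>roots. card (children (ler_merge F y z) r))
      \<le> (\<Sum>r\<in>roots. (if r = z then ?c z + ?c y else if r = y then 0 else ?c r))"
    by (rule sum_mono)
  also have "\<dots> = (\<Sum>r\<in>roots. ?c r)"
    using finite_roots yz_roots yz(1) by (rule sum_merge_into)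
  finally show ?thesis .
qed

lemma ler_merge_root_path:
  assumes "root_path F p m"
  shows "root_path (ler_merge F y z) (redirect y z \<circ> p) m"
  unfolding root_path_def
proof (intro conjI allI impI)
  show "(redirect y z \<circ> p) 0 \<in> nodes (ler_merge F y z)"
    using assms invariant_nbr_node[OF I z(1)] unfolding root_path_def redirect_def
    by (simp add: ler_merge_simps)
  show "is_root ((redirect y z \<circ> p) 0)"
    using assms redirect_root[OF z(2)] unfolding root_path_def by simp
  show "\<not> is_root ((redirect y z \<circ> p) j)" if "0 < j \<and> j \<le> m" for j
    using assms that redirect_nonroot[OF y(2)] unfolding root_path_def by simp
  show "((redirect y z \<circ> p) j, (redirect y z \<circ> p) (Suc j)) \<in> edges (ler_merge F y z)"
    if "j < m" for j
    using assms that unfolding root_path_def ler_merge_edges_iff by auto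
qed

lemma ler_merge_invariant: "invariant (ler_merge F y z)"
proof (rule invariantI)
  have demand: "settled_demand F v \<le> settled_demand (ler_merge F y z) v" for v
    using ler_merge_settled by (rule settled_demand_mono)
  show "card (children (ler_merge F y z) v) \<le> settled_demand (ler_merge F y z) v"
    if "\<not> is_root v" for v
    using invariant_children[OF I that] demand[of v] ler_merge_children_nonroot[OF that] by simp
  have "(\<Sum>r\<in>roots. card (children (ler_merge F y z) r)) \<le> (\<Sum>r\<in>roots. settled_demand F r)"
    using ler_merge_root_children invariant_root_children[OF I] by (rule order_trans)
  also have "\<dots> \<le> (\<Sum>r\<in>roots. settled_demand (ler_merge F y z) r)"
    using demand by (rule sum_mono)
  finally show "(\<Sum>r\<in>roots. card (children (ler_merge F y z) r))
    \<le> (\<Sum>r\<in>roots. settled_demand (ler_merge F y z) r)" .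
  show "\<exists>p m. m \<le> Suc depth_bound \<and> root_path (ler_merge F y z) p m \<and> p m = v"
    if v: "v \<in> nodes (ler_merge F y z)" "\<not> is_root v" for v
  proof -
    have "v \<in> nodes F"
      using v(1) by (simp add: ler_merge_simps)
    then obtain p m where "m \<le> Suc depth_bound" "root_path F p m" "p m = v"
      using invariant_root_path[OF I _ v(2)] by blast
    then show ?thesis
      using ler_merge_root_path redirect_nonroot[OF y(2) v(2)]
      by (intro exI[of _ "redirect y z \<circ> p"] exI[of _ m]) auto
  qed
  show "edges (ler_merge F y z) \<subseteq> nodes (ler_merge F y z) \<times> nodes (ler_merge F y z)"
    using invariant_edges[OF I] invariant_nbr_node[OF I z(1)]
    unfolding ler_merge_edges[OF yz(1)] redirect_def by (auto simp: ler_merge_simps)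
  show "elab (ler_merge F y z) u v \<subseteq> roles" for u v
    using invariant_elab[OF I] by (rule ler_merge_elab_subset)
  show "sym (neqr (ler_merge F y z))"
    unfolding ler_merge_simps by (rule sym_merge_neqr[OF invariant_sym[OF I]])
  show "is_root u" if "(u, v) \<in> edges (ler_merge F y z)" "is_root v" for u v
    using that invariant_root_parent[OF I] redirect_root[OF z(2)] redirect_eq_nonroot[OF y(2) z(2)]
    unfolding ler_merge_edges_iff by metis
  show "u = u'" if "(u, v) \<in> edges (ler_merge F y z)" "(u', v) \<in> edges (ler_merge F y z)"
    "\<not> is_root v" for u u' v
    using that invariant_parent[OF I] redirect_eq_nonroot[OF y(2) z(2)]
    unfolding ler_merge_edges_iff by metis
  have "inner_edges (ler_merge F y z) \<subseteq> inner_edges F"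
  proof
    fix e
    assume "e \<in> inner_edges (ler_merge F y z)"
    then obtain a b where ab: "(a, b) \<in> edges F" "e = (redirect y z a, redirect y z b)"
        "\<not> is_root (redirect y z a)"
      unfolding inner_edges_def ler_merge_edges_iff by blast
    then have "\<not> is_root a" "\<not> is_root b"
      using redirect_root[OF z(2)] invariant_root_parent[OF I ab(1)] by blast+
    then show "e \<in> inner_edges F"
      using ab redirect_nonroot[OF y(2)] unfolding inner_edges_def by simp
  qed
  then show "acyclic (inner_edges (ler_merge F y z))"
    using invariant_acyclic[OF I] acyclic_subset by blast
qed (use invariant_finite[OF I] invariant_lab[OF I] invariant_roots[OF I]
    invariant_roots_nodes[OF I] in
  \<open>auto simp: ler_merge_simps\<close>)

lemma ler_merge_progress: "invariant (ler_merge F y z) \<and> (ler_merge F y z, F) \<in> progress"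
proof -
  have "y \<in> live_roots F"
    using invariant_roots[OF I] invariant_nbr_node[OF I y(1)] y not_removed_root_nbr
    unfolding live_roots_def by blast
  then have "live_roots (ler_merge F y z) \<subset> live_roots F"
    using ler_merge_removed_root ler_merge_removed_node unfolding live_roots_def by blast
  then show ?thesis
    using ler_merge_invariant progress_live_roots by (simp add: ler_merge_simps)
qed

end

lemma ler_rule_progress:
  assumes "invariant F" and "ler_rule Rh F F'"
  shows "invariant F' \<and> (F', F) \<in> progress"
  using assms(2) ler_merge_progress[OF assms(1)] unfolding ler_rule_def by blast

subsection \<open>Termination\<close>

lemma step_progress:
  assumes I: "invariant F" and "step A0 Tr Rh F F'"
  shows "invariant F' \<and> (F', F) \<in> progress"
proof -
  consider "label_extension F F'" | "ex_rule Rh F F'" | "ge_rule Rh F F'" | "le_rule Rh F F'"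
    | "ler_rule Rh F F'"
    using assms(2) and_rule_label_extension[OF I] or_rule_label_extension[OF I]
      all_rule_label_extension[OF I] all_plus_rule_label_extension[OF I]
      choose_rule_label_extension[OF I]
    unfolding step_def by blast
  then show ?thesis
    by cases (use label_extension_progress[OF I] ex_rule_progress[OF I] ge_rule_progress[OF I]
      le_rule_progress[OF I] ler_rule_progress[OF I] in blast)+
qed

lemma no_infinite_run: "\<nexists>f. f 0 = init_forest Ab \<and> (\<forall>i. step A0 Tr Rh (f i) (f (Suc i)))"
proof
  assume "\<exists>f. f 0 = init_forest Ab \<and> (\<forall>i. step A0 Tr Rh (f i) (f (Suc i)))"
  then obtain f where f0: "f 0 = init_forest Ab" and steps: "\<And>i. step A0 Tr Rh (f i) (f (Suc i))"
    by blast
  have I: "invariant (f i)" for i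
    by (induction i) (use f0 invariant_init_forest step_progress steps in auto)
  have "(f (Suc i), f i) \<in> progress" for i
    using step_progress[OF I steps] by blast
  moreover have "wf progress"
    unfolding progress_def by simp
  ultimately show False
    unfolding wf_iff_no_infinite_down_chain by blast
qed

end

theorem lemma8:
  fixes Ab :: "('i, 'c, 'r) assertion set"
    and Rh :: "('r role \<times> 'r role) set"
    and Tr :: "'r set"
    and A0 :: 'c
  assumes "shiq_abox Tr Rh Ab"
    and "finite Rh"
  shows "\<not> (\<exists>f. f 0 = init_forest Ab \<and>
              (\<forall>i. \<not> clash Rh (f i) \<and> step A0 Tr Rh (f i) (f (Suc i))))"
proof -
  interpret shiq_completion Ab Rh Tr A0
    using assms unfolding shiq_abox_def by unfold_locales blast+
  \<comment> \<open>No run is infinite, whether or not it meets a clash.\<close>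
  show ?thesis
    using no_infinite_run by blast
qed

end
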